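(* Assume that the presentation $\mathcal{P}^{[2]}_r(e,b)$ is consistent and that the test equations \begin{align*} c(a_k c(a_j a_i)) &= c(c(a_k a_j) a_i) & (w(a_k)+w(a_j)+w(a_i) \leq d),\\ c(r_j c(a_j a_i)) &= c( c(r_j a_j) a_i) & (r_j < \infty,\ w(a_j)+w(a_i) \leq d),\\ c(r_i c(a_j a_i )) &= c( a_j c( r_i a_i)) & (r_i < \infty,\ w(a_j)+w(a_i) \leq d) \end{align*} hold. Then the $R$-linear maps $\varphi_L, \varphi_R \colon A^{[2]} \rightarrow A^{[2]}$ induced by $\tau_L,\tau_R$ satisfy, for all $b,b'\in A^{[2]}$: (i) $\varphi_L(s) = \varphi_R(s)$; (ii) $\varphi_L^2(b) = sb$ and $\varphi_R^2(b) = bs$; (iii) $\varphi_L(bb')=\varphi_L(b)b'$ and $\varphi_R(bb')=b\varphi_R(b')$; (iv) $\varphi_R(b)b'=b \varphi_L(b')$ and $\varphi_L(\varphi_R(b))=\varphi_R(\varphi_L(b))$; and, if $r_1<\infty$, also (v) $pb=r_1\varphi_L(b)$ and (vi) $bp=r_1\varphi_R(b)$.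
   Context: Let $R$ be a field or the ring of integers; all algebras are associative. $\mathcal{P}_r(e,b)$ is a nilpotent presentation on generators $a_1,\ldots,a_n$ with $r_1,\ldots,r_n \in \mathbb N \cup \{\infty\}$ and $e_{i,k}, b_{i,j,k} \in R$ (with $0 \leq e_{i,k}, b_{i,j,k} < r_k$ whenever $r_k<\infty$) and relations $r_i a_i = e_{i,i+1} a_{i+1} + \ldots + e_{i,n} a_n$ (for $r_i<\infty$) and $a_j a_i = b_{i,j,\ell+1} a_{\ell+1} + \ldots + b_{i,j,n} a_n$ with $\ell = \max\{i,j\}$ (for $1\le i,j\le n$). For $1 \le k \le n$, $\mathcal{P}^{[k]}_r(e,b)$ is the presentation on $a_k,\ldots,a_n$ whose relations are those relations of $\mathcal{P}_r(e,b)$ involving only these generators; $A^{[k]}$ is the algebra it defines and $F_k$ is the free associative algebra on $a_k,\ldots,a_n$. A presentation is consistent if each element of the defined algebra is represented by a unique reduced form $x_1a_1+\ldots+x_na_n$ ($0\le x_i<r_i$ if $r_i<\infty$). $c$ denotes the function on the free algebra induced by the collection algorithm, mapping an element to one of its reduced forms. $w$ is a weight function: $w(a_i)\in\mathbb N$ minimal subject to $w(a_k)\ge w(a_i)$ whenever $e_{i,k}\neq0$ and $w(a_k)\ge w(a_i)+w(a_j)$ whenever $b_{i,j,k}\ne 0$; $d=\max\{w(a_1),\ldots,w(a_n)\}$. The maps $\tau_L,\tau_R\colon F_2\to F_2$ are defined by $\tau_L(a_j)=\sum_{k=1}^n b_{j,1,k}a_k$ with $\tau_L(vw)=\tau_L(v)w$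 for all $v,w\in F_2$, and $\tau_R(a_j)=\sum_{k=1}^n b_{1,j,k}a_k$ with $\tau_R(vw)=v\tau_R(w)$ for all $v,w\in F_2$; under these hypotheses they induce $R$-linear maps $\varphi_L,\varphi_R$ on $A^{[2]}$. Further $s=\sum_{k=1}^n b_{1,1,k}a_k$ (representing $a_1a_1$) and, if $r_1<\infty$, $p=\sum_{k=1}^n e_{1,k}a_k$ (representing $r_1a_1$); $s,p$ also denote their images in $A^{[2]}$. *)

theory Defs
  imports Main "HOL-Library.Poly_Mapping"
begin

text \<open>Generators are a_1,...,a_n (indices 1..n). r i = None encodes r_i = infinity,
 r i = Some m encodes r_i = m (a positive natural number).
 e i k and b i j k are the coefficients e_{i,k}, b_{i,j,k}; only indices with
 i < k <= n (resp. max i j < k <= n) are used.\<close>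

section \<open>Free (non-unital) associative algebra on generators, as finitely supported
  functions from words (lists of generator indices) to R\<close>

type_synonym 'r ncpoly = "nat list \<Rightarrow>\<^sub>0 'r"

definition ncmul :: "'r::comm_ring_1 ncpoly \<Rightarrow> 'r ncpoly \<Rightarrow> 'r ncpoly" where
  "ncmul p q = (\<Sum>u\<in>Poly_Mapping.keys p. \<Sum>v\<in>Poly_Mapping.keys q. Poly_Mapping.single (u @ v) (Poly_Mapping.lookup p u * Poly_Mapping.lookup q v))"

definition ncsc :: "'r::comm_ring_1 \<Rightarrow> 'r ncpoly \<Rightarrow> 'r ncpoly" where
  "ncsc c p = (\<Sum>u\<in>Poly_Mapping.keys p. Poly_Mapping.single u (c * Poly_Mapping.lookup p u))"

definition free_alg :: "nat \<Rightarrow> nat \<Rightarrow> 'r::comm_ring_1 ncpoly set" where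
  "free_alg n k = {p. \<forall>u\<in>Poly_Mapping.keys p. u \<noteq> [] \<and> set u \<subseteq> {k..n}}"

definition linpoly :: "nat \<Rightarrow> nat \<Rightarrow> (nat \<Rightarrow> 'r::comm_ring_1) \<Rightarrow> 'r ncpoly" where
  "linpoly n k x = (\<Sum>l\<in>{k..n}. Poly_Mapping.single [l] (x l))"

definition pres_rels :: "nat \<Rightarrow> (nat \<Rightarrow> nat option) \<Rightarrow> (nat \<Rightarrow> nat \<Rightarrow> 'r::comm_ring_1)
    \<Rightarrow> (nat \<Rightarrow> nat \<Rightarrow> nat \<Rightarrow> 'r) \<Rightarrow> nat \<Rightarrow> 'r ncpoly set" where
  "pres_rels n r e b k =
     {Poly_Mapping.single [i] (of_nat m) - (\<Sum>l\<in>{i<..n}. Poly_Mapping.single [l] (e i l)) | i m.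
        i \<in> {k..n} \<and> r i = Some m}
   \<union> {Poly_Mapping.single [j, i] 1 - (\<Sum>l\<in>{max i j<..n}. Poly_Mapping.single [l] (b i j l)) | i j.
        i \<in> {k..n} \<and> j \<in> {k..n}}"

inductive_set pres_ideal :: "nat \<Rightarrow> (nat \<Rightarrow> nat option) \<Rightarrow> (nat \<Rightarrow> nat \<Rightarrow> 'r::comm_ring_1)
    \<Rightarrow> (nat \<Rightarrow> nat \<Rightarrow> nat \<Rightarrow> 'r) \<Rightarrow> nat \<Rightarrow> 'r ncpoly set"
  for n r e b k where
  rel: "p \<in> pres_rels n r e b k \<Longrightarrow> p \<in> pres_ideal n r e b k"
| zero: "0 \<in> pres_ideal n r e b k"
| add: "p \<in> pres_ideal n r e b k \<Longrightarrow> q \<in> pres_ideal n r e b k \<Longrightarrow> p + q \<in> pres_ideal n r e b k"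
| smul: "p \<in> pres_ideal n r e b k \<Longrightarrow> ncsc c p \<in> pres_ideal n r e b k"
| lmul: "p \<in> pres_ideal n r e b k \<Longrightarrow> u \<noteq> [] \<Longrightarrow> set u \<subseteq> {k..n} \<Longrightarrow>
           ncmul (Poly_Mapping.single u 1) p \<in> pres_ideal n r e b k"
| rmul: "p \<in> pres_ideal n r e b k \<Longrightarrow> u \<noteq> [] \<Longrightarrow> set u \<subseteq> {k..n} \<Longrightarrow>
           ncmul p (Poly_Mapping.single u 1) \<in> pres_ideal n r e b k"

text \<open>Equality in A^[k] of the images of two elements of F_k.\<close>
definition alg_eq :: "nat \<Rightarrow> (nat \<Rightarrow> nat option) \<Rightarrow> (nat \<Rightarrow> nat \<Rightarrow> 'r::comm_ring_1)
    \<Rightarrow> (nat \<Rightarrow> nat \<Rightarrow> nat \<Rightarrow> 'r) \<Rightarrow> nat \<Rightarrow> 'r ncpoly \<Rightarrow> 'r ncpoly \<Rightarrow> bool" where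
  "alg_eq n r e b k p q \<longleftrightarrow> p - q \<in> pres_ideal n r e b k"

definition red_coeff :: "nat \<Rightarrow> 'r::comm_ring_1 \<Rightarrow> bool" where
  "red_coeff m x \<longleftrightarrow> x \<in> of_nat ` {..<m}"

definition reduced_form :: "nat \<Rightarrow> (nat \<Rightarrow> nat option) \<Rightarrow> nat \<Rightarrow> (nat \<Rightarrow> 'r::comm_ring_1) \<Rightarrow> bool" where
  "reduced_form n r k x \<longleftrightarrow> (\<forall>l. (l < k \<or> n < l) \<longrightarrow> x l = 0)
      \<and> (\<forall>l\<in>{k..n}. \<forall>m. r l = Some m \<longrightarrow> red_coeff m (x l))"

definition consistent :: "nat \<Rightarrow> (nat \<Rightarrow> nat option) \<Rightarrow> (nat \<Rightarrow> nat \<Rightarrow> 'r::comm_ring_1)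
    \<Rightarrow> (nat \<Rightarrow> nat \<Rightarrow> nat \<Rightarrow> 'r) \<Rightarrow> nat \<Rightarrow> bool" where
  "consistent n r e b k \<longleftrightarrow>
     (\<forall>p\<in>free_alg n k. \<exists>!x. reduced_form n r k x \<and> alg_eq n r e b k p (linpoly n k x))"

definition nil_presentation :: "nat \<Rightarrow> (nat \<Rightarrow> nat option) \<Rightarrow> (nat \<Rightarrow> nat \<Rightarrow> 'r::comm_ring_1)
    \<Rightarrow> (nat \<Rightarrow> nat \<Rightarrow> nat \<Rightarrow> 'r) \<Rightarrow> bool" where
  "nil_presentation n r e b \<longleftrightarrow>
     (\<forall>i\<in>{1..n}. r i \<noteq> Some 0)
   \<and> (\<forall>i\<in>{1..n}. \<forall>k\<in>{i<..n}. \<forall>m. r i \<noteq> None \<and> r k = Some m \<longrightarrow> red_coeff m (e i k))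
   \<and> (\<forall>i\<in>{1..n}. \<forall>j\<in>{1..n}. \<forall>k\<in>{max i j<..n}. \<forall>m. r k = Some m \<longrightarrow> red_coeff m (b i j k))"

definition weight_ok :: "nat \<Rightarrow> (nat \<Rightarrow> nat option) \<Rightarrow> (nat \<Rightarrow> nat \<Rightarrow> 'r::comm_ring_1)
    \<Rightarrow> (nat \<Rightarrow> nat \<Rightarrow> nat \<Rightarrow> 'r) \<Rightarrow> (nat \<Rightarrow> nat) \<Rightarrow> bool" where
  "weight_ok n r e b w \<longleftrightarrow>
     (\<forall>i\<in>{1..n}. 1 \<le> w i)
   \<and> (\<forall>i\<in>{1..n}. \<forall>k\<in>{i<..n}. r i \<noteq> None \<and> e i k \<noteq> 0 \<longrightarrow> w i \<le> w k)
   \<and> (\<forall>i\<in>{1..n}. \<forall>j\<in>{1..n}. \<forall>k\<in>{max i j<..n}. b i j k \<noteq> 0 \<longrightarrow> w i + w j \<le> w k)"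

definition weight :: "nat \<Rightarrow> (nat \<Rightarrow> nat option) \<Rightarrow> (nat \<Rightarrow> nat \<Rightarrow> 'r::comm_ring_1)
    \<Rightarrow> (nat \<Rightarrow> nat \<Rightarrow> nat \<Rightarrow> 'r) \<Rightarrow> nat \<Rightarrow> nat" where
  "weight n r e b i = (LEAST m. \<exists>w. weight_ok n r e b w \<and> w i = m)"

definition max_weight :: "nat \<Rightarrow> (nat \<Rightarrow> nat option) \<Rightarrow> (nat \<Rightarrow> nat \<Rightarrow> 'r::comm_ring_1)
    \<Rightarrow> (nat \<Rightarrow> nat \<Rightarrow> nat \<Rightarrow> 'r) \<Rightarrow> nat" where
  "max_weight n r e b = Max (weight n r e b ` {1..n})"

section \<open>The collection function c on linear forms (coefficient vectors x, x_l for a_l)\<close>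

definition rem_r :: "nat \<Rightarrow> 'r::comm_ring_1 \<Rightarrow> 'r" where
  "rem_r m x = (SOME y. red_coeff m y \<and> (\<exists>q. x = q * of_nat m + y))"

definition quot_r :: "nat \<Rightarrow> 'r::comm_ring_1 \<Rightarrow> 'r" where
  "quot_r m x = (SOME q. x = q * of_nat m + rem_r m x)"

text \<open>Reduce the coefficient of a_l using r_l a_l = e_{l,l+1} a_{l+1} + ... + e_{l,n} a_n.\<close>
definition red_step :: "nat \<Rightarrow> (nat \<Rightarrow> nat option) \<Rightarrow> (nat \<Rightarrow> nat \<Rightarrow> 'r::comm_ring_1)
    \<Rightarrow> nat \<Rightarrow> (nat \<Rightarrow> 'r) \<Rightarrow> (nat \<Rightarrow> 'r)" where
  "red_step n r e l x = (case r l of None \<Rightarrow> x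
     | Some m \<Rightarrow> (\<lambda>t. if t = l then rem_r m (x l)
                       else if l < t \<and> t \<le> n then x t + quot_r m (x l) * e l t else x t))"

definition collect_lin :: "nat \<Rightarrow> (nat \<Rightarrow> nat option) \<Rightarrow> (nat \<Rightarrow> nat \<Rightarrow> 'r::comm_ring_1)
    \<Rightarrow> (nat \<Rightarrow> 'r) \<Rightarrow> (nat \<Rightarrow> 'r)" where
  "collect_lin n r e x = fold (red_step n r e) [1..<Suc n] x"

text \<open>Product of two linear forms u*v, expanded using a_j a_i = sum_l b_{i,j,l} a_l
  (left factor a_j, right factor a_i); the result is again a linear form.\<close>
definition mul_lin :: "nat \<Rightarrow> (nat \<Rightarrow> nat \<Rightarrow> nat \<Rightarrow> 'r::comm_ring_1)
    \<Rightarrow> (nat \<Rightarrow> 'r) \<Rightarrow> (nat \<Rightarrow> 'r) \<Rightarrow> (nat \<Rightarrow> 'r)" where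
  "mul_lin n b u v = (\<lambda>l. if 1 \<le> l \<and> l \<le> n then
      (\<Sum>j\<in>{1..n}. \<Sum>i\<in>{1..n}. if max i j < l then u j * v i * b i j l else 0) else 0)"

definition gen_lin :: "nat \<Rightarrow> nat \<Rightarrow> 'r::comm_ring_1" where
  "gen_lin i = (\<lambda>l. if l = i then 1 else 0)"

definition scale_lin :: "'r::comm_ring_1 \<Rightarrow> (nat \<Rightarrow> 'r) \<Rightarrow> (nat \<Rightarrow> 'r)" where
  "scale_lin c x = (\<lambda>l. c * x l)"

definition c_mul :: "nat \<Rightarrow> (nat \<Rightarrow> nat option) \<Rightarrow> (nat \<Rightarrow> nat \<Rightarrow> 'r::comm_ring_1)
    \<Rightarrow> (nat \<Rightarrow> nat \<Rightarrow> nat \<Rightarrow> 'r) \<Rightarrow> (nat \<Rightarrow> 'r) \<Rightarrow> (nat \<Rightarrow> 'r) \<Rightarrow> (nat \<Rightarrow> 'r)" where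
  "c_mul n r e b u v = collect_lin n r e (mul_lin n b u v)"

definition c_scale :: "nat \<Rightarrow> (nat \<Rightarrow> nat option) \<Rightarrow> (nat \<Rightarrow> nat \<Rightarrow> 'r::comm_ring_1)
    \<Rightarrow> nat \<Rightarrow> (nat \<Rightarrow> 'r) \<Rightarrow> (nat \<Rightarrow> 'r)" where
  "c_scale n r e m u = collect_lin n r e (scale_lin (of_nat m) u)"

definition tauL_gen :: "nat \<Rightarrow> (nat \<Rightarrow> nat \<Rightarrow> nat \<Rightarrow> 'r::comm_ring_1) \<Rightarrow> nat \<Rightarrow> 'r ncpoly" where
  "tauL_gen n b j = (\<Sum>l\<in>{max j 1<..n}. Poly_Mapping.single [l] (b j 1 l))"

definition tauR_gen :: "nat \<Rightarrow> (nat \<Rightarrow> nat \<Rightarrow> nat \<Rightarrow> 'r::comm_ring_1) \<Rightarrow> nat \<Rightarrow> 'r ncpoly" where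
  "tauR_gen n b j = (\<Sum>l\<in>{max 1 j<..n}. Poly_Mapping.single [l] (b 1 j l))"

definition tauL :: "nat \<Rightarrow> (nat \<Rightarrow> nat \<Rightarrow> nat \<Rightarrow> 'r::comm_ring_1) \<Rightarrow> 'r ncpoly \<Rightarrow> 'r ncpoly" where
  "tauL n b p = (\<Sum>u\<in>Poly_Mapping.keys p. ncmul (tauL_gen n b (hd u)) (Poly_Mapping.single (tl u) (Poly_Mapping.lookup p u)))"

definition tauR :: "nat \<Rightarrow> (nat \<Rightarrow> nat \<Rightarrow> nat \<Rightarrow> 'r::comm_ring_1) \<Rightarrow> 'r ncpoly \<Rightarrow> 'r ncpoly" where
  "tauR n b p = (\<Sum>u\<in>Poly_Mapping.keys p. ncmul (Poly_Mapping.single (butlast u) (Poly_Mapping.lookup p u)) (tauR_gen n b (last u)))"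

definition s_elem :: "nat \<Rightarrow> (nat \<Rightarrow> nat \<Rightarrow> nat \<Rightarrow> 'r::comm_ring_1) \<Rightarrow> 'r ncpoly" where
  "s_elem n b = (\<Sum>l\<in>{1<..n}. Poly_Mapping.single [l] (b 1 1 l))"

definition p_elem :: "nat \<Rightarrow> (nat \<Rightarrow> nat \<Rightarrow> 'r::comm_ring_1) \<Rightarrow> 'r ncpoly" where
  "p_elem n e = (\<Sum>l\<in>{1<..n}. Poly_Mapping.single [l] (e 1 l))"

end

theory Submission
  imports Defs
begin

(* All identities are shown in F_2 modulo the relation ideal of P^[2].

   A coefficient vector with zero a_1-entry stands for an element of A^[2], and collecting it does
   not change that element. As a_j a_i only involves generators beyond a_(max i j), every collected
   product c(u v) has zero a_1-entry, so each test equation says that two ways of computing a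
   product agree in A^[2]. A factor a_1 on the left (right) of such a product acts through
   tau_L (tau_R), since tau_L(a_j) and tau_R(a_j) are the right-hand sides of a_1 a_j and a_j a_1.
   This is legitimate once tau_L and tau_R respect the power relations r_i a_i = e_(i,i+1) a_(i+1)
   + ..., which follows from the test equations with a power by downward induction on i. Taking
   one or two factors of a test equation to be a_1 now yields each identity on generators; e.g.
   c(a_1 c(a_1 a_j)) = c(c(a_1 a_1) a_j) gives tau_L(tau_L(a_j)) = s a_j. Test equations above the
   maximal weight d hold anyway, both sides being zero. Finally, tau_L and tau_R only touch the
   first, resp. last, letter of a word, which carries the identities from generators to F_2. *)

section \<open>Noncommutative polynomials\<close>

abbreviation word :: "nat list \<Rightarrow> 'r::comm_ring_1 ncpoly" where
  "word u \<equiv> Poly_Mapping.single u 1"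

abbreviation gen :: "nat \<Rightarrow> 'r::comm_ring_1 ncpoly" where
  "gen j \<equiv> word [j]"

lemma poly_mapping_sum_single:
  "p = (\<Sum>u\<in>Poly_Mapping.keys p. Poly_Mapping.single u (Poly_Mapping.lookup p u))"
  by (rule poly_mapping_eqI) (auto simp: lookup_sum lookup_single when_def in_keys_iff)

lemma lookup_ncsc: "Poly_Mapping.lookup (ncsc c p) u = c * Poly_Mapping.lookup p u"
  by (auto simp: ncsc_def lookup_sum lookup_single when_def in_keys_iff)

lemma keys_ncsc_subset: "Poly_Mapping.keys (ncsc c p) \<subseteq> Poly_Mapping.keys p"
  by (auto simp: in_keys_iff lookup_ncsc)

lemma ncsc_add: "ncsc c (p + q) = ncsc c p + ncsc c q"
  by (rule poly_mapping_eqI) (simp add: lookup_ncsc lookup_add distrib_left)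

lemma ncsc_diff: "ncsc c (p - q) = ncsc c p - ncsc c q"
  by (rule poly_mapping_eqI) (simp add: lookup_ncsc lookup_minus right_diff_distrib)

lemma ncsc_diff_left: "ncsc (c - d) p = ncsc c p - ncsc d p"
  by (rule poly_mapping_eqI) (simp add: lookup_ncsc lookup_minus left_diff_distrib)

lemma ncsc_ncsc: "ncsc c (ncsc d p) = ncsc (c * d) p"
  by (rule poly_mapping_eqI) (simp add: lookup_ncsc)

lemma ncsc_single: "ncsc c (Poly_Mapping.single u a) = Poly_Mapping.single u (c * a)"
  by (rule poly_mapping_eqI) (simp add: lookup_ncsc lookup_single when_def)

lemma ncsc_0 [simp]: "ncsc c 0 = 0" "ncsc 0 p = 0"
  by (rule poly_mapping_eqI, simp add: lookup_ncsc)+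

lemma ncsc_1 [simp]: "ncsc 1 p = p"
  by (rule poly_mapping_eqI) (simp add: lookup_ncsc)

lemma ncsc_minus_one: "ncsc (- 1) p = - p"
  by (rule poly_mapping_eqI) (simp add: lookup_ncsc)

lemma ncsc_uminus: "ncsc (- c) p = - ncsc c p"
  by (rule poly_mapping_eqI) (simp add: lookup_ncsc)

lemma ncsc_sum: "ncsc c (sum f A) = (\<Sum>x\<in>A. ncsc c (f x))"
  by (rule poly_mapping_eqI) (simp add: lookup_ncsc lookup_sum sum_distrib_left)

lemma ncmul_superset:
  assumes "finite U" "finite V" "Poly_Mapping.keys p \<subseteq> U" "Poly_Mapping.keys q \<subseteq> V"
  shows "ncmul p q = (\<Sum>u\<in>U. \<Sum>v\<in>V.
           Poly_Mapping.single (u @ v) (Poly_Mapping.lookup p u * Poly_Mapping.lookup q v))"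
proof -
  have "(\<Sum>u\<in>U. \<Sum>v\<in>V. Poly_Mapping.single (u @ v) (Poly_Mapping.lookup p u * Poly_Mapping.lookup q v))
      = (\<Sum>u\<in>Poly_Mapping.keys p. \<Sum>v\<in>V.
           Poly_Mapping.single (u @ v) (Poly_Mapping.lookup p u * Poly_Mapping.lookup q v))"
    by (rule sum.mono_neutral_right) (use assms in \<open>auto simp: in_keys_iff\<close>)
  also have "\<dots> = ncmul p q"
    unfolding ncmul_def
    by (rule sum.cong[OF refl], rule sum.mono_neutral_right) (use assms in \<open>auto simp: in_keys_iff\<close>)
  finally show ?thesis ..
qed

lemma ncmul_add_left: "ncmul (p + q) s = ncmul p s + ncmul q s"
proof -
  let ?U = "Poly_Mapping.keys p \<union> Poly_Mapping.keys q" and ?V = "Poly_Mapping.keys s"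
  have "ncmul (p + q) s = (\<Sum>u\<in>?U. \<Sum>v\<in>?V.
          Poly_Mapping.single (u @ v) (Poly_Mapping.lookup (p + q) u * Poly_Mapping.lookup s v))"
    by (rule ncmul_superset) (use keys_add[of p q] in auto)
  then show ?thesis
    by (simp add: ncmul_superset[of ?U ?V p s] ncmul_superset[of ?U ?V q s] lookup_add
        distrib_right single_add sum.distrib)
qed

lemma ncmul_add_right: "ncmul s (p + q) = ncmul s p + ncmul s q"
proof -
  let ?U = "Poly_Mapping.keys p \<union> Poly_Mapping.keys q" and ?V = "Poly_Mapping.keys s"
  have "ncmul s (p + q) = (\<Sum>v\<in>?V. \<Sum>u\<in>?U.
          Poly_Mapping.single (v @ u) (Poly_Mapping.lookup s v * Poly_Mapping.lookup (p + q) u))"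
    by (rule ncmul_superset) (use keys_add[of p q] in auto)
  then show ?thesis
    by (simp add: ncmul_superset[of ?V ?U s p] ncmul_superset[of ?V ?U s q] lookup_add
        distrib_left single_add sum.distrib)
qed

lemma ncmul_ncsc_left: "ncmul (ncsc c p) q = ncsc c (ncmul p q)"
proof -
  have "ncmul (ncsc c p) q = (\<Sum>u\<in>Poly_Mapping.keys p. \<Sum>v\<in>Poly_Mapping.keys q.
          Poly_Mapping.single (u @ v) (Poly_Mapping.lookup (ncsc c p) u * Poly_Mapping.lookup q v))"
    by (rule ncmul_superset) (auto simp: keys_ncsc_subset[THEN subsetD])
  then show ?thesis by (simp add: ncmul_def ncsc_sum ncsc_single lookup_ncsc mult.assoc)
qed

lemma ncmul_ncsc_right: "ncmul p (ncsc c q) = ncsc c (ncmul p q)"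
proof -
  have "ncmul p (ncsc c q) = (\<Sum>u\<in>Poly_Mapping.keys p. \<Sum>v\<in>Poly_Mapping.keys q.
          Poly_Mapping.single (u @ v) (Poly_Mapping.lookup p u * Poly_Mapping.lookup (ncsc c q) v))"
    by (rule ncmul_superset) (auto simp: keys_ncsc_subset[THEN subsetD])
  then show ?thesis by (simp add: ncmul_def ncsc_sum ncsc_single lookup_ncsc mult.left_commute)
qed

lemma ncmul_single_single:
  "ncmul (Poly_Mapping.single u a) (Poly_Mapping.single v c) = Poly_Mapping.single (u @ v) (a * c)"
  by (subst ncmul_superset[of "{u}" "{v}"]) auto

lemma ncmul_single_Nil_left: "ncmul (Poly_Mapping.single [] c) p = ncsc c p"
  by (subst ncmul_superset[of "{[]}" "Poly_Mapping.keys p"]) (auto simp: ncsc_def)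

lemma ncmul_single_Nil_right: "ncmul p (Poly_Mapping.single [] c) = ncsc c p"
  by (subst ncmul_superset[of "Poly_Mapping.keys p" "{[]}"]) (auto simp: ncsc_def mult.commute)

lemma ncmul_0 [simp]: "ncmul 0 p = 0" "ncmul p 0 = 0"
  by (simp_all add: ncmul_def)

lemma ncmul_sum_left: "ncmul (sum f A) q = (\<Sum>x\<in>A. ncmul (f x) q)"
  by (induction A rule: infinite_finite_induct) (auto simp: ncmul_add_left)

lemma ncmul_sum_right: "ncmul q (sum f A) = (\<Sum>x\<in>A. ncmul q (f x))"
  by (induction A rule: infinite_finite_induct) (auto simp: ncmul_add_right)

lemma ncmul_diff_left: "ncmul (p - q) s = ncmul p s - ncmul q s"
  using ncmul_add_left[of p "- q" s] ncmul_ncsc_left[of "- 1" q s] by (simp add: ncsc_minus_one)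

lemma ncmul_diff_right: "ncmul s (p - q) = ncmul s p - ncmul s q"
  using ncmul_add_right[of s p "- q"] ncmul_ncsc_right[of s "- 1" q] by (simp add: ncsc_minus_one)

lemma ncmul_assoc: "ncmul (ncmul p q) s = ncmul p (ncmul q s)"
proof -
  have "ncmul (ncmul (\<Sum>u\<in>Poly_Mapping.keys p. Poly_Mapping.single u (Poly_Mapping.lookup p u))
                     (\<Sum>v\<in>Poly_Mapping.keys q. Poly_Mapping.single v (Poly_Mapping.lookup q v)))
              (\<Sum>w\<in>Poly_Mapping.keys s. Poly_Mapping.single w (Poly_Mapping.lookup s w))
      = ncmul (\<Sum>u\<in>Poly_Mapping.keys p. Poly_Mapping.single u (Poly_Mapping.lookup p u))
          (ncmul (\<Sum>v\<in>Poly_Mapping.keys q. Poly_Mapping.single v (Poly_Mapping.lookup q v))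
              (\<Sum>w\<in>Poly_Mapping.keys s. Poly_Mapping.single w (Poly_Mapping.lookup s w)))"
    by (simp add: ncmul_sum_left ncmul_sum_right ncmul_single_single mult.assoc)
  then show ?thesis by (simp only: poly_mapping_sum_single[symmetric])
qed

lemma word_Cons_eq_ncmul: "word (j # u) = ncmul (gen j) (word u)"
  by (simp add: ncmul_single_single)

lemma word_snoc_eq_ncmul: "word (u @ [j]) = ncmul (word u) (gen j)"
  by (simp add: ncmul_single_single)

definition nc_linear :: "('r::comm_ring_1 ncpoly \<Rightarrow> 'r ncpoly) \<Rightarrow> bool" where
  "nc_linear F \<longleftrightarrow> (\<forall>p q. F (p + q) = F p + F q) \<and> (\<forall>c p. F (ncsc c p) = ncsc c (F p))"

lemma nc_linear_add: "nc_linear F \<Longrightarrow> F (p + q) = F p + F q"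
  by (simp add: nc_linear_def)

lemma nc_linear_ncsc: "nc_linear F \<Longrightarrow> F (ncsc c p) = ncsc c (F p)"
  by (simp add: nc_linear_def)

lemma nc_linear_0: "nc_linear F \<Longrightarrow> F 0 = 0"
  using nc_linear_ncsc[of F 0 0] by simp

lemma nc_linear_sum: "nc_linear F \<Longrightarrow> F (sum f A) = (\<Sum>x\<in>A. F (f x))"
  by (induction A rule: infinite_finite_induct) (auto simp: nc_linear_0 nc_linear_add)

lemma nc_linear_compose: "nc_linear F \<Longrightarrow> nc_linear G \<Longrightarrow> nc_linear (\<lambda>x. F (G x))"
  by (simp add: nc_linear_def)

lemma nc_linear_left_mult: "nc_linear (\<lambda>x. ncmul q x)"
  by (simp add: nc_linear_def ncmul_add_right ncmul_ncsc_right)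

lemma nc_linear_right_mult: "nc_linear (\<lambda>x. ncmul x q)"
  by (simp add: nc_linear_def ncmul_add_left ncmul_ncsc_left)

lemma nc_linear_scaling: "nc_linear (ncsc c)"
  by (simp add: nc_linear_def ncsc_add ncsc_ncsc mult.commute)

definition lift_terms :: "(nat list \<Rightarrow> 'r::comm_ring_1 \<Rightarrow> 'r ncpoly) \<Rightarrow> 'r ncpoly \<Rightarrow> 'r ncpoly" where
  "lift_terms h p = (\<Sum>u\<in>Poly_Mapping.keys p. h u (Poly_Mapping.lookup p u))"

lemma additive_imp_zero:
  fixes h :: "'b::monoid_add \<Rightarrow> 'a::ab_group_add"
  assumes "\<And>a a'. h (a + a') = h a + h a'"
  shows "h 0 = 0"
proof -
  have "h 0 + h 0 = h 0 + 0" using assms[of 0 0] by simp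
  then show ?thesis by (rule add_left_imp_eq)
qed

lemma lift_terms_single:
  assumes "\<And>u a a'. h u (a + a') = h u a + h u a'"
  shows "lift_terms h (Poly_Mapping.single v c) = h v c"
  using additive_imp_zero[of "h v", OF assms] by (simp add: lift_terms_def)

lemma nc_linear_lift_terms:
  assumes add: "\<And>u a a'. h u (a + a') = h u a + h u a'"
    and scale: "\<And>u c a. h u (c * a) = ncsc c (h u a)"
  shows "nc_linear (lift_terms h)"
proof -
  have h0: "h u 0 = 0" for u by (rule additive_imp_zero) (rule add)
  have "lift_terms h (p + q) = lift_terms h p + lift_terms h q" for p q
    unfolding lift_terms_def by (rule setsum_keys_plus_distrib) (simp_all add: h0 add)
  moreover have "lift_terms h (ncsc c p) = ncsc c (lift_terms h p)" for c p
  proof -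
    have "lift_terms h (ncsc c p)
        = (\<Sum>u\<in>Poly_Mapping.keys p. h u (Poly_Mapping.lookup (ncsc c p) u))"
      unfolding lift_terms_def
      by (rule sum.mono_neutral_left)
        (auto simp: keys_ncsc_subset[THEN subsetD] in_keys_iff lookup_ncsc h0)
    also have "\<dots> = ncsc c (lift_terms h p)"
      by (simp add: lookup_ncsc scale lift_terms_def ncsc_sum)
    finally show ?thesis .
  qed
  ultimately show ?thesis by (simp add: nc_linear_def)
qed

lemma tauL_eq_lift_terms:
  "tauL n b = lift_terms (\<lambda>u c. ncmul (tauL_gen n b (hd u)) (Poly_Mapping.single (tl u) c))"
  by (simp add: fun_eq_iff tauL_def lift_terms_def)

lemma tauR_eq_lift_terms:
  "tauR n b = lift_terms (\<lambda>u c. ncmul (Poly_Mapping.single (butlast u) c) (tauR_gen n b (last u)))"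
  by (simp add: fun_eq_iff tauR_def lift_terms_def)

lemma tauL_single:
  "tauL n b (Poly_Mapping.single u c) = ncmul (tauL_gen n b (hd u)) (Poly_Mapping.single (tl u) c)"
  unfolding tauL_eq_lift_terms by (rule lift_terms_single) (simp add: single_add ncmul_add_right)

lemma tauR_single:
  "tauR n b (Poly_Mapping.single u c) = ncmul (Poly_Mapping.single (butlast u) c) (tauR_gen n b (last u))"
  unfolding tauR_eq_lift_terms by (rule lift_terms_single) (simp add: single_add ncmul_add_left)

lemma nc_linear_tauL: "nc_linear (tauL n b)"
  unfolding tauL_eq_lift_terms
  by (rule nc_linear_lift_terms)
    (simp_all add: single_add ncmul_add_right ncmul_ncsc_right[symmetric] ncsc_single)

lemma nc_linear_tauR: "nc_linear (tauR n b)"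
  unfolding tauR_eq_lift_terms
  by (rule nc_linear_lift_terms)
    (simp_all add: single_add ncmul_add_left ncmul_ncsc_left[symmetric] ncsc_single)

lemma tauL_ncmul:
  assumes "[] \<notin> Poly_Mapping.keys p"
  shows "tauL n b (ncmul p q) = ncmul (tauL n b p) q"
proof -
  let ?P = "\<lambda>u. Poly_Mapping.lookup p u" and ?Q = "\<lambda>v. Poly_Mapping.lookup q v"
  have "tauL n b (ncmul p q) = (\<Sum>u\<in>Poly_Mapping.keys p. \<Sum>v\<in>Poly_Mapping.keys q.
      ncmul (tauL_gen n b (hd u)) (Poly_Mapping.single (tl u @ v) (?P u * ?Q v)))"
    unfolding ncmul_def[of p q] nc_linear_sum[OF nc_linear_tauL] tauL_single
    using assms by (intro sum.cong refl) (metis hd_append2 tl_append2)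
  also have "\<dots> = (\<Sum>u\<in>Poly_Mapping.keys p. \<Sum>v\<in>Poly_Mapping.keys q.
      ncmul (ncmul (tauL_gen n b (hd u)) (Poly_Mapping.single (tl u) (?P u))) (Poly_Mapping.single v (?Q v)))"
    by (simp add: ncmul_assoc ncmul_single_single)
  also have "\<dots> = ncmul (tauL n b p) (\<Sum>v\<in>Poly_Mapping.keys q. Poly_Mapping.single v (?Q v))"
    by (simp add: tauL_def ncmul_sum_left ncmul_sum_right) (rule sum.swap)
  finally show ?thesis by (simp flip: poly_mapping_sum_single)
qed

lemma tauR_ncmul:
  assumes "[] \<notin> Poly_Mapping.keys q"
  shows "tauR n b (ncmul p q) = ncmul p (tauR n b q)"
proof -
  let ?P = "\<lambda>u. Poly_Mapping.lookup p u" and ?Q = "\<lambda>v. Poly_Mapping.lookup q v"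
  have "tauR n b (ncmul p q) = (\<Sum>u\<in>Poly_Mapping.keys p. \<Sum>v\<in>Poly_Mapping.keys q.
      ncmul (Poly_Mapping.single (u @ butlast v) (?P u * ?Q v)) (tauR_gen n b (last v)))"
    unfolding ncmul_def[of p q] using assms
    by (auto simp: nc_linear_sum[OF nc_linear_tauR] tauR_single butlast_append intro!: sum.cong)
  also have "\<dots> = (\<Sum>u\<in>Poly_Mapping.keys p. \<Sum>v\<in>Poly_Mapping.keys q.
      ncmul (Poly_Mapping.single u (?P u)) (ncmul (Poly_Mapping.single (butlast v) (?Q v)) (tauR_gen n b (last v))))"
    by (simp add: ncmul_assoc[symmetric] ncmul_single_single)
  also have "\<dots> = ncmul (\<Sum>u\<in>Poly_Mapping.keys p. Poly_Mapping.single u (?P u)) (tauR n b q)"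
    by (simp add: tauR_def ncmul_sum_left ncmul_sum_right) (rule sum.swap)
  finally show ?thesis by (simp flip: poly_mapping_sum_single)
qed

section \<open>The relation ideal\<close>

definition over_gens :: "nat \<Rightarrow> nat \<Rightarrow> 'r::zero ncpoly \<Rightarrow> bool" where
  "over_gens n k q \<longleftrightarrow> (\<forall>u\<in>Poly_Mapping.keys q. set u \<subseteq> {k..n})"

lemma over_gens_single: "set u \<subseteq> {k..n} \<Longrightarrow> over_gens n k (Poly_Mapping.single u c)"
  by (simp add: over_gens_def)

lemma over_gens_sum: "(\<And>x. x \<in> A \<Longrightarrow> over_gens n k (f x)) \<Longrightarrow> over_gens n k (sum f A)"
  unfolding over_gens_def using keys_sum[of f A] by blast

lemma free_alg_Nil_notin: "x \<in> free_alg n k \<Longrightarrow> [] \<notin> Poly_Mapping.keys x"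
  by (auto simp: free_alg_def)

context
  fixes n :: nat and r :: "nat \<Rightarrow> nat option" and e :: "nat \<Rightarrow> nat \<Rightarrow> 'r::comm_ring_1"
    and b :: "nat \<Rightarrow> nat \<Rightarrow> nat \<Rightarrow> 'r" and k :: nat
begin

lemma pres_ideal_uminus: "p \<in> pres_ideal n r e b k \<Longrightarrow> - p \<in> pres_ideal n r e b k"
  by (metis pres_ideal.smul ncsc_minus_one)

lemma pres_ideal_sum:
  "(\<And>x. x \<in> A \<Longrightarrow> f x \<in> pres_ideal n r e b k) \<Longrightarrow> sum f A \<in> pres_ideal n r e b k"
  by (induction A rule: infinite_finite_induct) (auto intro: pres_ideal.zero pres_ideal.add)

lemma pres_ideal_ncmul_left:
  assumes q: "over_gens n k q" and p: "p \<in> pres_ideal n r e b k"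
  shows "ncmul q p \<in> pres_ideal n r e b k"
proof -
  have "ncmul (Poly_Mapping.single u c) p \<in> pres_ideal n r e b k" if "set u \<subseteq> {k..n}" for u c
  proof (cases "u = []")
    case True
    then show ?thesis by (simp add: ncmul_single_Nil_left p pres_ideal.smul)
  next
    case False
    have "ncmul (Poly_Mapping.single u c) p = ncsc c (ncmul (word u) p)"
      by (simp add: ncsc_single flip: ncmul_ncsc_left)
    then show ?thesis using False that by (simp add: p pres_ideal.lmul pres_ideal.smul)
  qed
  then show ?thesis
    using q unfolding over_gens_def
    by (subst poly_mapping_sum_single[of q]) (auto simp: ncmul_sum_left intro: pres_ideal_sum)
qed

lemma pres_ideal_ncmul_right:
  assumes q: "over_gens n k q" and p: "p \<in> pres_ideal n r e b k"
  shows "ncmul p q \<in> pres_ideal n r e b k"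
proof -
  have "ncmul p (Poly_Mapping.single u c) \<in> pres_ideal n r e b k" if "set u \<subseteq> {k..n}" for u c
  proof (cases "u = []")
    case True
    then show ?thesis by (simp add: ncmul_single_Nil_right p pres_ideal.smul)
  next
    case False
    have "ncmul p (Poly_Mapping.single u c) = ncsc c (ncmul p (word u))"
      by (simp add: ncsc_single flip: ncmul_ncsc_right)
    then show ?thesis using False that by (simp add: p pres_ideal.rmul pres_ideal.smul)
  qed
  then show ?thesis
    using q unfolding over_gens_def
    by (subst poly_mapping_sum_single[of q]) (auto simp: ncmul_sum_right intro: pres_ideal_sum)
qed

lemma alg_eq_refl [simp]: "alg_eq n r e b k p p"
  by (simp add: alg_eq_def pres_ideal.zero)

lemma alg_eq_sym: "alg_eq n r e b k p q \<Longrightarrow> alg_eq n r e b k q p"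
  unfolding alg_eq_def by (metis pres_ideal_uminus minus_diff_eq)

lemma alg_eq_trans [trans]:
  "alg_eq n r e b k p q \<Longrightarrow> alg_eq n r e b k q s \<Longrightarrow> alg_eq n r e b k p s"
  unfolding alg_eq_def using pres_ideal.add[of "p - q" n r e b k "q - s"] by simp

lemma alg_eq_ncsc: "alg_eq n r e b k p q \<Longrightarrow> alg_eq n r e b k (ncsc c p) (ncsc c q)"
  unfolding alg_eq_def by (metis pres_ideal.smul ncsc_diff)

lemma alg_eq_ncmul_left:
  "over_gens n k s \<Longrightarrow> alg_eq n r e b k p q \<Longrightarrow> alg_eq n r e b k (ncmul s p) (ncmul s q)"
  unfolding alg_eq_def by (metis pres_ideal_ncmul_left ncmul_diff_right)

lemma alg_eq_ncmul_right:
  "over_gens n k s \<Longrightarrow> alg_eq n r e b k p q \<Longrightarrow> alg_eq n r e b k (ncmul p s) (ncmul q s)"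
  unfolding alg_eq_def by (metis pres_ideal_ncmul_right ncmul_diff_left)

lemma alg_eq_by_words:
  assumes F: "nc_linear F" and G: "nc_linear G"
    and words: "\<And>u. u \<noteq> [] \<Longrightarrow> set u \<subseteq> {k..n} \<Longrightarrow>
                  alg_eq n r e b k (F (word u)) (G (word u))"
    and x: "x \<in> free_alg n k"
  shows "alg_eq n r e b k (F x) (G x)"
proof -
  let ?x = "\<lambda>u. Poly_Mapping.lookup x u"
  have "F x - G x = (\<Sum>u\<in>Poly_Mapping.keys x.
          ncsc (?x u) (F (word u) - G (word u)))"
    by (subst (1 2) poly_mapping_sum_single)
      (simp add: nc_linear_sum[OF F] nc_linear_sum[OF G] ncsc_diff sum_subtractf
        nc_linear_ncsc[OF F, symmetric] nc_linear_ncsc[OF G, symmetric] ncsc_single)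
  also have "\<dots> \<in> pres_ideal n r e b k"
    using x words by (auto simp: free_alg_def alg_eq_def intro!: pres_ideal_sum pres_ideal.smul)
  finally show ?thesis unfolding alg_eq_def .
qed

end

section \<open>Division with remainder in \<open>\<int>\<close>\<close>

lemma red_coeff_0: "0 < m \<Longrightarrow> red_coeff m 0"
  unfolding red_coeff_def by (rule image_eqI[of _ _ 0]) auto

context
  assumes int_ring: "bij (of_int :: int \<Rightarrow> 'r::comm_ring_1)"
begin

lemma red_coeff_division_exists:
  assumes "0 < m"
  shows "\<exists>y. red_coeff m y \<and> (\<exists>q. (x::'r) = q * of_nat m + y)"
proof -
  obtain k where k: "x = of_int k" using int_ring by (metis bij_pointE)
  have "x = of_int (k div int m) * of_nat m + of_int (k mod int m)"
    using k by (metis div_mult_mod_eq of_int_add of_int_mult of_int_of_nat_eq)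
  moreover have "of_int (k mod int m) = (of_nat (nat (k mod int m)) :: 'r)"
    using assms by simp
  then have "red_coeff m (of_int (k mod int m) :: 'r)"
    using assms unfolding red_coeff_def by (intro image_eqI[of _ _ "nat (k mod int m)"]) (auto simp: nat_less_iff)
  ultimately show ?thesis by blast
qed

lemma red_coeff_division_unique:
  assumes "0 < m" "red_coeff m y" "red_coeff m y'"
    and eq: "q * of_nat m + y = q' * of_nat m + (y' :: 'r)"
  shows "y = y' \<and> q = q'"
proof -
  obtain a a' where a: "a < m" "y = of_nat a" "a' < m" "y' = of_nat a'"
    using assms(2,3) by (auto simp: red_coeff_def)
  obtain k k' where k: "q = of_int k" "q' = of_int k'"
    using int_ring by (metis bij_pointE)
  have "(of_int (k * int m + int a) :: 'r) = of_int (k' * int m + int a')"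
    using eq a k by simp
  then have "k * int m + int a = k' * int m + int a'"
    using int_ring by (meson bij_is_inj injD)
  moreover have "(k * int m + int a) mod int m = int a" "(k' * int m + int a') mod int m = int a'"
    using a assms(1) by simp_all
  ultimately have "a = a'" by simp
  moreover from this have "k = k'" using \<open>k * int m + int a = k' * int m + int a'\<close> assms(1) by simp
  ultimately show ?thesis using a k by simp
qed

lemma rem_quot_r:
  assumes "0 < m"
  shows "red_coeff m (rem_r m x) \<and> x = quot_r m x * of_nat m + rem_r m (x::'r)"
proof -
  have rem: "red_coeff m (rem_r m x) \<and> (\<exists>q. x = q * of_nat m + rem_r m x)"
    unfolding rem_r_def by (rule someI_ex) (rule red_coeff_division_exists[OF assms])
  then have "x = quot_r m x * of_nat m + rem_r m x"
    unfolding quot_r_def using someI_ex[of "\<lambda>q. x = q * of_nat m + rem_r m x"] by blast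
  with rem show ?thesis by blast
qed

lemma rem_quot_r_unique:
  assumes "0 < m" "red_coeff m y" "(x::'r) = q * of_nat m + y"
  shows "rem_r m x = y \<and> quot_r m x = q"
  using red_coeff_division_unique[OF assms(1) _ assms(2), of "rem_r m x" "quot_r m x" q]
    rem_quot_r[OF assms(1), of x] assms(3) by argo

lemma rem_quot_r_0: "0 < m \<Longrightarrow> rem_r m (0::'r) = 0 \<and> quot_r m (0::'r) = 0"
  using rem_quot_r_unique[of m 0 0 0] red_coeff_0 by auto

lemma rem_quot_r_of_nat: "0 < m \<Longrightarrow> rem_r m (of_nat m :: 'r) = 0 \<and> quot_r m (of_nat m :: 'r) = 1"
  using rem_quot_r_unique[of m 0 "of_nat m" 1] red_coeff_0 by auto

end

definition lin_eval :: "nat \<Rightarrow> (nat \<Rightarrow> 'r::comm_ring_1 ncpoly) \<Rightarrow> (nat \<Rightarrow> 'r) \<Rightarrow> 'r ncpoly" where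
  "lin_eval n g z = (\<Sum>l\<in>{2..n}. ncsc (z l) (g l))"

definition vanishes_below :: "nat \<Rightarrow> (nat \<Rightarrow> 'r::zero) \<Rightarrow> bool" where
  "vanishes_below k z \<longleftrightarrow> (\<forall>t<k. z t = 0)"

text \<open>\<open>prod_rhs n b i j\<close> is the right-hand side of the relation for \<open>a\<^sub>j a\<^sub>i\<close>
  (the left factor is the second index).\<close>
definition prod_rhs :: "nat \<Rightarrow> (nat \<Rightarrow> nat \<Rightarrow> nat \<Rightarrow> 'r::comm_ring_1) \<Rightarrow> nat \<Rightarrow> nat \<Rightarrow> 'r ncpoly" where
  "prod_rhs n b i j = (\<Sum>l\<in>{max i j<..n}. Poly_Mapping.single [l] (b i j l))"

definition power_rhs_vec :: "nat \<Rightarrow> (nat \<Rightarrow> nat \<Rightarrow> 'r::comm_ring_1) \<Rightarrow> nat \<Rightarrow> nat \<Rightarrow> 'r" where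
  "power_rhs_vec n e i = (\<lambda>t. if i < t \<and> t \<le> n then e i t else 0)"

lemma tauL_gen_eq_prod_rhs: "tauL_gen n b j = prod_rhs n b j 1"
  by (simp add: tauL_gen_def prod_rhs_def)

lemma tauR_gen_eq_prod_rhs: "tauR_gen n b j = prod_rhs n b 1 j"
  by (simp add: tauR_gen_def prod_rhs_def)

lemma s_elem_eq_prod_rhs: "s_elem n b = prod_rhs n b 1 1"
  by (simp add: s_elem_def prod_rhs_def)

lemma Nil_notin_keys_prod_rhs: "[] \<notin> Poly_Mapping.keys (prod_rhs n b i j)"
  using keys_sum[of "\<lambda>l. Poly_Mapping.single [l] (b i j l)" "{max i j<..n}"]
  unfolding prod_rhs_def by (auto split: if_splits)

lemma vanishes_below_mono: "vanishes_below k z \<Longrightarrow> k' \<le> k \<Longrightarrow> vanishes_below k' z"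
  by (auto simp: vanishes_below_def)

lemma vanishes_below_gen_lin: "2 \<le> j \<Longrightarrow> vanishes_below 2 (gen_lin j)"
  by (auto simp: vanishes_below_def gen_lin_def)

lemma vanishes_below_scale_lin: "vanishes_below k z \<Longrightarrow> vanishes_below k (scale_lin c z)"
  by (auto simp: vanishes_below_def scale_lin_def)

lemma vanishes_below_power_rhs_vec: "vanishes_below (Suc i) (power_rhs_vec n e i)"
  by (auto simp: vanishes_below_def power_rhs_vec_def)

lemma vanishes_below_mul_lin: "vanishes_below 2 (mul_lin n b u v)"
  unfolding vanishes_below_def mul_lin_def
proof (intro allI impI)
  fix t :: nat
  assume "t < 2"
  then have "(\<Sum>j\<in>{1..n}. \<Sum>i\<in>{1..n}. if max i j < t then u j * v i * b i j t else 0) = 0"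
    by (intro sum.neutral ballI) auto
  then show "(if 1 \<le> t \<and> t \<le> n then \<Sum>j\<in>{1..n}. \<Sum>i\<in>{1..n}.
      if max i j < t then u j * v i * b i j t else 0 else 0) = 0"
    by simp
qed

lemma linpoly_eq_lin_eval: "linpoly n 2 z = lin_eval n (\<lambda>l. gen l) z"
  by (simp add: linpoly_def lin_eval_def ncsc_single)

lemma lin_eval_diff: "lin_eval n g z - lin_eval n g z' = lin_eval n g (\<lambda>t. z t - z' t)"
  by (simp add: lin_eval_def sum_subtractf ncsc_diff_left)

lemma lin_eval_eq_sum_from_1:
  "vanishes_below 2 z \<Longrightarrow> lin_eval n g z = (\<Sum>l\<in>{1..n}. ncsc (z l) (g l))"
  unfolding lin_eval_def by (rule sum.mono_neutral_left) (auto simp: vanishes_below_def)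

lemma lin_eval_power_rhs_vec:
  assumes "1 \<le> i"
  shows "lin_eval n g (power_rhs_vec n e i) = (\<Sum>t\<in>{i<..n}. ncsc (e i t) (g t))"
proof -
  have "lin_eval n g (power_rhs_vec n e i) = (\<Sum>t\<in>{2..n} \<inter> {i<..n}. ncsc (e i t) (g t))"
    unfolding lin_eval_def sum.inter_restrict[OF finite_atLeastAtMost]
    by (rule sum.cong) (auto simp: power_rhs_vec_def)
  also have "{2..n} \<inter> {i<..n} = {i<..n}" using assms by auto
  finally show ?thesis .
qed

lemma linpoly_power_rhs_vec_1: "linpoly n 2 (power_rhs_vec n e 1) = p_elem n e"
  by (simp add: linpoly_eq_lin_eval lin_eval_power_rhs_vec p_elem_def ncsc_single)

lemma linpoly_gen_lin:
  assumes "j \<in> {2..n}"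
  shows "linpoly n 2 (gen_lin j) = gen j"
proof -
  have "linpoly n 2 (gen_lin j) = (\<Sum>l\<in>{2..n}. if l = j then gen j else 0)"
    unfolding linpoly_def by (rule sum.cong) (auto simp: gen_lin_def)
  then show ?thesis using assms by simp
qed

lemma linpoly_scale_lin: "linpoly n 2 (scale_lin c z) = ncsc c (linpoly n 2 z)"
  by (simp add: linpoly_def scale_lin_def ncsc_sum ncsc_single)

lemma tauL_linpoly: "tauL n b (linpoly n 2 z) = lin_eval n (tauL_gen n b) z"
  by (simp add: linpoly_def lin_eval_def nc_linear_sum[OF nc_linear_tauL] tauL_single
      ncmul_single_Nil_right)

lemma tauR_linpoly: "tauR n b (linpoly n 2 z) = lin_eval n (tauR_gen n b) z"
  by (simp add: linpoly_def lin_eval_def nc_linear_sum[OF nc_linear_tauR] tauR_single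
      ncmul_single_Nil_left)

lemma single_sum: "Poly_Mapping.single k (sum f A) = (\<Sum>x\<in>A. Poly_Mapping.single k (f x))"
  by (induction A rule: infinite_finite_induct) (simp_all add: single_add)

lemma linpoly_mul_lin:
  "linpoly n 2 (mul_lin n b u v) = (\<Sum>j\<in>{1..n}. \<Sum>i\<in>{1..n}. ncsc (u j * v i) (prod_rhs n b i j))"
proof -
  let ?c = "\<lambda>j i l. if max i j < l then u j * v i * b i j l else 0"
  have inner: "(\<Sum>l\<in>{2..n}. Poly_Mapping.single [l] (?c j i l)) = ncsc (u j * v i) (prod_rhs n b i j)"
    if "i \<in> {1..n}" "j \<in> {1..n}" for i j
  proof -
    have "(\<Sum>l\<in>{2..n}. Poly_Mapping.single [l] (?c j i l))
        = (\<Sum>l\<in>{2..n} \<inter> {max i j<..n}. Poly_Mapping.single [l] (u j * v i * b i j l))"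
      unfolding sum.inter_restrict[OF finite_atLeastAtMost] by (rule sum.cong) auto
    also have "{2..n} \<inter> {max i j<..n} = {max i j<..n}" using that by auto
    finally show ?thesis by (simp add: prod_rhs_def ncsc_sum ncsc_single)
  qed
  have "linpoly n 2 (mul_lin n b u v)
      = (\<Sum>l\<in>{2..n}. \<Sum>j\<in>{1..n}. \<Sum>i\<in>{1..n}. Poly_Mapping.single [l] (?c j i l))"
    unfolding linpoly_def mul_lin_def
    by (rule sum.cong) (auto simp: single_sum)
  also have "\<dots> = (\<Sum>j\<in>{1..n}. \<Sum>i\<in>{1..n}. \<Sum>l\<in>{2..n}. Poly_Mapping.single [l] (?c j i l))"
    by (subst sum.swap) (simp add: sum.swap[of _ "{2..n}"])
  also have "\<dots> = (\<Sum>j\<in>{1..n}. \<Sum>i\<in>{1..n}. ncsc (u j * v i) (prod_rhs n b i j))"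
    by (intro sum.cong refl inner)
  finally show ?thesis .
qed

lemma linpoly_mul_lin_gen_left:
  assumes "j \<in> {1..n}"
  shows "linpoly n 2 (mul_lin n b (gen_lin j) v) = (\<Sum>i\<in>{1..n}. ncsc (v i) (prod_rhs n b i j))"
proof -
  have "linpoly n 2 (mul_lin n b (gen_lin j) v)
      = (\<Sum>j'\<in>{1..n}. if j' = j then \<Sum>i\<in>{1..n}. ncsc (v i) (prod_rhs n b i j) else 0)"
    unfolding linpoly_mul_lin by (rule sum.cong) (auto simp: gen_lin_def)
  then show ?thesis using assms by simp
qed

lemma linpoly_mul_lin_gen_right:
  assumes "i \<in> {1..n}"
  shows "linpoly n 2 (mul_lin n b u (gen_lin i)) = (\<Sum>j\<in>{1..n}. ncsc (u j) (prod_rhs n b i j))"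
proof -
  have "linpoly n 2 (mul_lin n b u (gen_lin i))
      = (\<Sum>j\<in>{1..n}. \<Sum>i'\<in>{1..n}. if i' = i then ncsc (u j) (prod_rhs n b i j) else 0)"
    unfolding linpoly_mul_lin by (intro sum.cong refl) (auto simp: gen_lin_def)
  then show ?thesis using assms by simp
qed

lemma linpoly_mul_lin_gens:
  assumes "i \<in> {1..n}" "j \<in> {1..n}"
  shows "linpoly n 2 (mul_lin n b (gen_lin j) (gen_lin i)) = prod_rhs n b i j"
proof -
  have "linpoly n 2 (mul_lin n b (gen_lin j) (gen_lin i))
      = (\<Sum>i'\<in>{1..n}. if i' = i then prod_rhs n b i j else 0)"
    unfolding linpoly_mul_lin_gen_left[OF assms(2)] by (rule sum.cong) (auto simp: gen_lin_def)
  then show ?thesis using assms(1) by simp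
qed

lemma linpoly_mul_lin_gen1_left:
  "1 \<le> n \<Longrightarrow> vanishes_below 2 z \<Longrightarrow> linpoly n 2 (mul_lin n b (gen_lin 1) z) = lin_eval n (tauL_gen n b) z"
  by (simp add: linpoly_mul_lin_gen_left lin_eval_eq_sum_from_1 tauL_gen_eq_prod_rhs)

lemma linpoly_mul_lin_gen1_right:
  "1 \<le> n \<Longrightarrow> vanishes_below 2 z \<Longrightarrow> linpoly n 2 (mul_lin n b z (gen_lin 1)) = lin_eval n (tauR_gen n b) z"
  by (simp add: linpoly_mul_lin_gen_right lin_eval_eq_sum_from_1 tauR_gen_eq_prod_rhs)

section \<open>Collection\<close>

definition power_rels_hold :: "nat \<Rightarrow> (nat \<Rightarrow> nat option) \<Rightarrow> (nat \<Rightarrow> nat \<Rightarrow> 'r::comm_ring_1)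
    \<Rightarrow> (nat \<Rightarrow> nat \<Rightarrow> nat \<Rightarrow> 'r) \<Rightarrow> (nat \<Rightarrow> 'r ncpoly) \<Rightarrow> nat \<Rightarrow> bool" where
  "power_rels_hold n r e b g k \<longleftrightarrow> (\<forall>l m. k \<le> l \<longrightarrow> l \<le> n \<longrightarrow> r l = Some m \<longrightarrow>
     alg_eq n r e b 2 (ncsc (of_nat m) (g l)) (\<Sum>t\<in>{l<..n}. ncsc (e l t) (g t)))"

locale nilpotent_pres =
  fixes n :: nat and r :: "nat \<Rightarrow> nat option"
    and e :: "nat \<Rightarrow> nat \<Rightarrow> 'r::comm_ring_1" and b :: "nat \<Rightarrow> nat \<Rightarrow> nat \<Rightarrow> 'r"
  assumes coeff_ring: "((\<forall>x::'r. x \<noteq> 0 \<longrightarrow> (\<exists>y. x * y = 1)) \<and> (\<forall>i. r i = None))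
                       \<or> bij (of_int :: int \<Rightarrow> 'r)"
    and pres: "nil_presentation n r e b"
begin

abbreviation alg_eq2 :: "'r ncpoly \<Rightarrow> 'r ncpoly \<Rightarrow> bool" (infix "\<approx>" 50) where
  "p \<approx> q \<equiv> alg_eq n r e b 2 p q"

lemma finite_order_imp_int_ring:
  "l \<in> {1..n} \<Longrightarrow> r l = Some m \<Longrightarrow> bij (of_int :: int \<Rightarrow> 'r) \<and> 0 < m"
  using coeff_ring pres unfolding nil_presentation_def by (metis gr0I option.distinct(1))

lemma red_step_zero_coeff:
  assumes "l \<in> {1..n}" "z l = 0"
  shows "red_step n r e l z = z"
proof (cases "r l")
  case (Some m)
  then have "rem_r m (0::'r) = 0 \<and> quot_r m (0::'r) = 0"
    using assms(1) by (metis finite_order_imp_int_ring rem_quot_r_0)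
  then show ?thesis using assms(2) by (auto simp: red_step_def Some fun_eq_iff)
qed (simp add: red_step_def)

lemma vanishes_below_red_step:
  assumes "l \<in> {1..n}" "vanishes_below k z"
  shows "vanishes_below k (red_step n r e l z)"
proof (cases "l < k")
  case True
  then show ?thesis using assms by (simp add: red_step_zero_coeff vanishes_below_def)
next
  case False
  then show ?thesis using assms by (auto simp: vanishes_below_def red_step_def split: option.splits)
qed

lemma vanishes_below_collect_lin:
  assumes "vanishes_below k z"
  shows "vanishes_below k (collect_lin n r e z)"
proof -
  have fold: "vanishes_below k (fold (red_step n r e) ls z)"
    if "set ls \<subseteq> {1..n}" "vanishes_below k z" for ls z
    using that by (induction ls arbitrary: z) (auto simp: vanishes_below_red_step)
  show ?thesis unfolding collect_lin_def by (rule fold) (auto simp: assms)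
qed

text \<open>A reduction step at \<open>a\<^sub>l\<close> with coefficient \<open>q m + y\<close> changes the value by
  \<open>-q\<close> times the power relation of \<open>a\<^sub>l\<close>.\<close>
lemma lin_eval_red_step:
  assumes k: "2 \<le> k" and g: "power_rels_hold n r e b g k" and z: "vanishes_below k z"
    and l: "l \<in> {1..n}"
  shows "lin_eval n g (red_step n r e l z) \<approx> lin_eval n g z"
proof (cases "r l = None \<or> z l = 0")
  case True
  then have "red_step n r e l z = z"
    using red_step_zero_coeff[OF l] by (auto simp: red_step_def)
  then show ?thesis by simp
next
  case False
  then obtain m where m: "r l = Some m" and "z l \<noteq> 0" by auto
  then have lk: "k \<le> l" using z by (auto simp: vanishes_below_def not_less[symmetric])
  define q where "q = quot_r m (z l)"
  have "z l = q * of_nat m + rem_r m (z l)"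
    using rem_quot_r[of m "z l"] finite_order_imp_int_ring[OF l m] by (simp add: q_def)
  then have zl: "rem_r m (z l) - z l = - (q * of_nat m)"
    by (metis minus_diff_eq add_diff_cancel_right')
  define d where "d t = ncsc (red_step n r e l z t - z t) (g t)" for t
  have d_other: "d t = (if t \<in> {l<..n} then ncsc (q * e l t) (g t) else 0)" if "t \<noteq> l" for t
    using that by (auto simp: d_def red_step_def m q_def)
  have "lin_eval n g (red_step n r e l z) - lin_eval n g z = (\<Sum>t\<in>{2..n}. d t)"
    unfolding lin_eval_diff by (simp add: lin_eval_def d_def)
  also have "\<dots> = d l + (\<Sum>t\<in>{2..n} - {l}. d t)"
    using l lk k by (subst sum.remove[of _ l]) auto
  also have "(\<Sum>t\<in>{2..n} - {l}. d t) = (\<Sum>t\<in>{l<..n}. ncsc (q * e l t) (g t))"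
    using lk k by (intro sum.mono_neutral_cong_right) (auto simp: d_other)
  also have "d l + \<dots> = ncsc (- q) (ncsc (of_nat m) (g l) - (\<Sum>t\<in>{l<..n}. ncsc (e l t) (g t)))"
    by (simp add: d_def red_step_def m zl ncsc_diff ncsc_ncsc ncsc_sum ncsc_uminus sum_negf)
  also have "\<dots> \<in> pres_ideal n r e b 2"
    using g lk l m by (intro pres_ideal.smul) (auto simp: power_rels_hold_def alg_eq_def)
  finally show ?thesis unfolding alg_eq_def .
qed

lemma lin_eval_collect_lin:
  assumes "2 \<le> k" "power_rels_hold n r e b g k" "vanishes_below k z"
  shows "lin_eval n g (collect_lin n r e z) \<approx> lin_eval n g z"
proof -
  have fold: "lin_eval n g (fold (red_step n r e) ls z) \<approx> lin_eval n g z"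
    if "set ls \<subseteq> {1..n}" "vanishes_below k z" for ls z
    using that
  proof (induction ls arbitrary: z)
    case (Cons l ls)
    then have "lin_eval n g (fold (red_step n r e) ls (red_step n r e l z))
        \<approx> lin_eval n g (red_step n r e l z)"
      by (intro Cons.IH vanishes_below_red_step) auto
    also have "\<dots> \<approx> lin_eval n g z"
      using Cons.prems assms by (intro lin_eval_red_step) auto
    finally show ?case by simp
  qed simp
  show ?thesis unfolding collect_lin_def by (rule fold) (auto simp: assms(3))
qed

lemma power_rels_hold_gens: "power_rels_hold n r e b (\<lambda>l. gen l) 2"
  unfolding power_rels_hold_def alg_eq_def
proof (intro allI impI)
  fix l m assume "2 \<le> l" "l \<le> n" "r l = Some m"
  then have "Poly_Mapping.single [l] (of_nat m) - (\<Sum>t\<in>{l<..n}. Poly_Mapping.single [t] (e l t))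
      \<in> pres_rels n r e b 2"
    unfolding pres_rels_def by auto
  then show "ncsc (of_nat m) (gen l)
      - (\<Sum>t\<in>{l<..n}. ncsc (e l t) (gen t)) \<in> pres_ideal n r e b 2"
    by (simp add: ncsc_single pres_ideal.rel)
qed

lemma linpoly_collect_lin: "vanishes_below 2 z \<Longrightarrow> linpoly n 2 (collect_lin n r e z) \<approx> linpoly n 2 z"
  unfolding linpoly_eq_lin_eval by (rule lin_eval_collect_lin[OF _ power_rels_hold_gens]) auto

lemma collect_lin_scale_gen_lin:
  assumes i: "i \<in> {1..n}" and m: "r i = Some m"
  shows "collect_lin n r e (scale_lin (of_nat m) (gen_lin i)) = collect_lin n r e (power_rhs_vec n e i)"
proof -
  have fold_id: "fold (red_step n r e) [1..<i] z = z" if "vanishes_below i z" for z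
  proof -
    have "fold (red_step n r e) ls z = z" if "set ls \<subseteq> {1..<i}" for ls
      using that \<open>vanishes_below i z\<close> i
      by (induction ls) (auto simp: red_step_zero_coeff vanishes_below_def)
    then show ?thesis by simp
  qed
  have split: "[1..<Suc n] = [1..<i] @ i # [Suc i..<Suc n]"
    using i upt_add_eq_append[of 1 i "Suc n - i"] upt_conv_Cons[of i "Suc n"] by auto
  have step_scale: "red_step n r e i (scale_lin (of_nat m) (gen_lin i)) = power_rhs_vec n e i"
    using rem_quot_r_of_nat finite_order_imp_int_ring[OF i m]
    by (auto simp: red_step_def m scale_lin_def gen_lin_def power_rhs_vec_def fun_eq_iff)
  have step_rel: "red_step n r e i (power_rhs_vec n e i) = power_rhs_vec n e i"
    using i by (intro red_step_zero_coeff) (auto simp: power_rhs_vec_def)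
  have "vanishes_below i (scale_lin (of_nat m :: 'r) (gen_lin i))" "vanishes_below i (power_rhs_vec n e i)"
    by (auto simp: vanishes_below_def scale_lin_def gen_lin_def power_rhs_vec_def)
  then show ?thesis
    unfolding collect_lin_def split
    by (simp only: fold_append fold_simps comp_apply fold_id step_scale step_rel)
qed

end

section \<open>Weights\<close>

lemma weight_ok_pow2: "weight_ok n r e b (\<lambda>i. 2 ^ i)"
proof -
  have "(2::nat) ^ i + 2 ^ j \<le> 2 ^ k" if "i < k" "j < k" for i j k
  proof -
    have "(2::nat) ^ i \<le> 2 ^ (k - 1)" "(2::nat) ^ j \<le> 2 ^ (k - 1)"
      using that by (auto intro: power_increasing)
    moreover have "(2::nat) ^ k = 2 * 2 ^ (k - 1)"
      using that by (simp flip: power_Suc)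
    ultimately show ?thesis by linarith
  qed
  then show ?thesis unfolding weight_ok_def by (auto intro: power_increasing)
qed

lemma weight_attained: "\<exists>w. weight_ok n r e b w \<and> w i = weight n r e b i"
  unfolding weight_def by (rule LeastI_ex) (use weight_ok_pow2 in blast)

lemma weight_le: "weight_ok n r e b w \<Longrightarrow> weight n r e b i \<le> w i"
  unfolding weight_def by (rule Least_le) blast

lemma weight_add_le_of_b:
  assumes "i \<in> {1..n}" "j \<in> {1..n}" "k \<in> {max i j<..n}" "b i j k \<noteq> 0"
  shows "weight n r e b i + weight n r e b j \<le> weight n r e b k"
proof -
  obtain w where w: "weight_ok n r e b w" "w k = weight n r e b k" using weight_attained by blast
  have "w i + w j \<le> w k" using w(1) assms unfolding weight_ok_def by blast
  then show ?thesis using weight_le[OF w(1), of i] weight_le[OF w(1), of j] w(2) by linarith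
qed

lemma weight_le_of_e:
  assumes "i \<in> {1..n}" "k \<in> {i<..n}" "r i \<noteq> None" "e i k \<noteq> 0"
  shows "weight n r e b i \<le> weight n r e b k"
proof -
  obtain w where w: "weight_ok n r e b w" "w k = weight n r e b k" using weight_attained by blast
  have "w i \<le> w k" using w(1) assms unfolding weight_ok_def by blast
  then show ?thesis using weight_le[OF w(1), of i] w(2) by linarith
qed

lemma weight_le_max_weight: "t \<in> {1..n} \<Longrightarrow> weight n r e b t \<le> max_weight n r e b"
  unfolding max_weight_def by (rule Max_ge) auto

definition weight_at_least :: "nat \<Rightarrow> (nat \<Rightarrow> nat option) \<Rightarrow> (nat \<Rightarrow> nat \<Rightarrow> 'r::comm_ring_1)
    \<Rightarrow> (nat \<Rightarrow> nat \<Rightarrow> nat \<Rightarrow> 'r) \<Rightarrow> nat \<Rightarrow> (nat \<Rightarrow> 'r) \<Rightarrow> bool" where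
  "weight_at_least n r e b A z \<longleftrightarrow> (\<forall>t. z t \<noteq> 0 \<longrightarrow> t \<in> {1..n} \<and> A \<le> weight n r e b t)"

lemma weight_at_least_gen_lin: "i \<in> {1..n} \<Longrightarrow> weight_at_least n r e b (weight n r e b i) (gen_lin i)"
  by (auto simp: weight_at_least_def gen_lin_def)

lemma weight_at_least_scale_lin:
  "weight_at_least n r e b A z \<Longrightarrow> weight_at_least n r e b A (scale_lin c z)"
  unfolding weight_at_least_def scale_lin_def by (metis mult_zero_right)

lemma weight_at_least_mul_lin:
  assumes u: "weight_at_least n r e b A u" and v: "weight_at_least n r e b B v"
  shows "weight_at_least n r e b (A + B) (mul_lin n b u v)"
  unfolding weight_at_least_def
proof (intro allI impI)
  fix t
  assume nz: "mul_lin n b u v t \<noteq> 0"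
  then have t: "t \<in> {1..n}" by (auto simp: mul_lin_def split: if_splits)
  with nz have "(\<Sum>j\<in>{1..n}. \<Sum>i\<in>{1..n}. if max i j < t then u j * v i * b i j t else 0) \<noteq> 0"
    by (simp add: mul_lin_def)
  then obtain j where j: "j \<in> {1..n}"
    and "(\<Sum>i\<in>{1..n}. if max i j < t then u j * v i * b i j t else 0) \<noteq> 0"
    by (rule sum.not_neutral_contains_not_neutral)
  from this(2) obtain i where i: "i \<in> {1..n}" and "(if max i j < t then u j * v i * b i j t else 0) \<noteq> 0"
    by (rule sum.not_neutral_contains_not_neutral)
  then have "max i j < t" "u j \<noteq> 0" "v i \<noteq> 0" "b i j t \<noteq> 0"
    by (auto split: if_splits)
  moreover from this have "A \<le> weight n r e b j" "B \<le> weight n r e b i"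
    using u v by (auto simp: weight_at_least_def)
  moreover have "weight n r e b i + weight n r e b j \<le> weight n r e b t"
    using i j t \<open>max i j < t\<close> \<open>b i j t \<noteq> 0\<close> by (intro weight_add_le_of_b) auto
  ultimately show "t \<in> {1..n} \<and> A + B \<le> weight n r e b t" using t by linarith
qed

lemma weight_at_least_above_max_weight:
  assumes "max_weight n r e b < A" "weight_at_least n r e b A z"
  shows "z = (\<lambda>_. 0)"
proof
  fix t
  show "z t = 0"
  proof (rule ccontr)
    assume "z t \<noteq> 0"
    then have "t \<in> {1..n}" "A \<le> weight n r e b t"
      using assms(2) unfolding weight_at_least_def by auto
    then show False using weight_le_max_weight[of t n r e b] assms(1) by simp
  qed
qed

context nilpotent_pres
begin

lemma weight_at_least_red_step:
  assumes l: "l \<in> {1..n}" and z: "weight_at_least n r e b A z"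
  shows "weight_at_least n r e b A (red_step n r e l z)"
proof (cases "r l = None \<or> z l = 0")
  case True
  then have "red_step n r e l z = z"
    using red_step_zero_coeff[OF l] by (auto simp: red_step_def)
  then show ?thesis using z by simp
next
  case False
  then obtain m where m: "r l = Some m" and "z l \<noteq> 0" by auto
  then have Al: "A \<le> weight n r e b l" using z by (auto simp: weight_at_least_def)
  show ?thesis
    unfolding weight_at_least_def
  proof (intro allI impI)
    fix t
    assume "red_step n r e l z t \<noteq> 0"
    then consider "t = l" | "z t \<noteq> 0" | "t \<in> {l<..n}" "e l t \<noteq> 0"
      by (cases "z t = 0") (auto simp: red_step_def m split: if_splits dest: mult_not_zero)
    then show "t \<in> {1..n} \<and> A \<le> weight n r e b t"
    proof cases
      case 3
      then have "weight n r e b l \<le> weight n r e b t" using weight_le_of_e[OF l, of t r e b] m by simp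
      then show ?thesis using 3 l Al by auto
    qed (use l Al z in \<open>auto simp: weight_at_least_def\<close>)
  qed
qed

lemma weight_at_least_collect_lin:
  assumes "weight_at_least n r e b A z"
  shows "weight_at_least n r e b A (collect_lin n r e z)"
proof -
  have fold: "weight_at_least n r e b A (fold (red_step n r e) ls z)"
    if "set ls \<subseteq> {1..n}" "weight_at_least n r e b A z" for ls z
    using that by (induction ls arbitrary: z) (auto simp: weight_at_least_red_step)
  show ?thesis unfolding collect_lin_def by (rule fold) (auto simp: assms)
qed

end

context nilpotent_pres
begin

lemma linpoly_mul_lin_alg_eq:
  assumes u: "vanishes_below 2 u" and v: "vanishes_below 2 v"
  shows "linpoly n 2 (mul_lin n b u v) \<approx> ncmul (linpoly n 2 u) (linpoly n 2 v)"
proof -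
  let ?c = "\<lambda>j i. u j * v i"
  have mul: "linpoly n 2 (mul_lin n b u v) = (\<Sum>j\<in>{2..n}. \<Sum>i\<in>{2..n}. ncsc (?c j i) (prod_rhs n b i j))"
    unfolding linpoly_mul_lin using u v
    by (intro sum.mono_neutral_cong_right ballI)
      (auto simp: vanishes_below_def intro!: sum.mono_neutral_cong_right sum.neutral)
  have ncmul: "ncmul (linpoly n 2 u) (linpoly n 2 v)
      = (\<Sum>j\<in>{2..n}. \<Sum>i\<in>{2..n}. ncsc (?c j i) (word [j, i]))"
    by (simp add: linpoly_def ncmul_sum_left ncmul_sum_right ncmul_single_single ncsc_single)
      (rule sum.swap)
  have rel: "prod_rhs n b i j - word [j, i] \<in> pres_ideal n r e b 2"
    if "i \<in> {2..n}" "j \<in> {2..n}" for i j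
  proof -
    have "word [j, i] - prod_rhs n b i j \<in> pres_rels n r e b 2"
      unfolding pres_rels_def prod_rhs_def using that by blast
    then show ?thesis by (metis pres_ideal.rel pres_ideal_uminus minus_diff_eq)
  qed
  have "linpoly n 2 (mul_lin n b u v) - ncmul (linpoly n 2 u) (linpoly n 2 v)
      = (\<Sum>j\<in>{2..n}. \<Sum>i\<in>{2..n}. ncsc (?c j i) (prod_rhs n b i j - word [j, i]))"
    unfolding mul ncmul by (simp add: ncsc_diff sum_subtractf)
  also have "\<dots> \<in> pres_ideal n r e b 2"
    by (intro pres_ideal_sum pres_ideal.smul rel)
  finally show ?thesis unfolding alg_eq_def .
qed

lemma vanishes_below_c_mul: "vanishes_below 2 (c_mul n r e b u v)"
  unfolding c_mul_def by (intro vanishes_below_collect_lin vanishes_below_mul_lin)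

lemma linpoly_c_mul:
  "vanishes_below 2 u \<Longrightarrow> vanishes_below 2 v \<Longrightarrow>
   linpoly n 2 (c_mul n r e b u v) \<approx> ncmul (linpoly n 2 u) (linpoly n 2 v)"
  unfolding c_mul_def
  by (rule alg_eq_trans[OF linpoly_collect_lin[OF vanishes_below_mul_lin] linpoly_mul_lin_alg_eq])

lemma linpoly_c_mul_gens:
  "i \<in> {1..n} \<Longrightarrow> j \<in> {1..n} \<Longrightarrow> linpoly n 2 (c_mul n r e b (gen_lin j) (gen_lin i)) \<approx> prod_rhs n b i j"
  unfolding c_mul_def
  using linpoly_collect_lin[OF vanishes_below_mul_lin[of n b "gen_lin j" "gen_lin i"]]
  by (simp add: linpoly_mul_lin_gens)

lemma linpoly_c_scale:
  assumes "vanishes_below 2 u"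
  shows "linpoly n 2 (c_scale n r e m u) \<approx> ncsc (of_nat m) (linpoly n 2 u)"
  unfolding c_scale_def
  using linpoly_collect_lin[OF vanishes_below_scale_lin[OF assms]] by (simp add: linpoly_scale_lin)

lemma power_rels_hold_downward:
  assumes step: "\<And>i m. i \<in> {2..n} \<Longrightarrow> r i = Some m \<Longrightarrow> power_rels_hold n r e b g (Suc i) \<Longrightarrow>
      ncsc (of_nat m) (g i) \<approx> (\<Sum>t\<in>{i<..n}. ncsc (e i t) (g t))"
  shows "power_rels_hold n r e b g 2"
proof -
  have "power_rels_hold n r e b g k" if "2 \<le> k" for k
    using that
  proof (induction "Suc n - k" arbitrary: k)
    case 0
    then show ?case by (auto simp: power_rels_hold_def)
  next
    case (Suc d)
    then have IH: "power_rels_hold n r e b g (Suc k)" by simp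
    show ?case
      unfolding power_rels_hold_def
    proof (intro allI impI)
      fix l m
      assume l: "k \<le> l" "l \<le> n" "r l = Some m"
      show "ncsc (of_nat m) (g l) \<approx> (\<Sum>t\<in>{l<..n}. ncsc (e l t) (g t))"
      proof (cases "l = k")
        case True
        then show ?thesis using step[of l m] IH Suc.prems l by auto
      next
        case False
        then show ?thesis using IH l unfolding power_rels_hold_def by auto
      qed
    qed
  qed
  then show ?thesis by simp
qed

end

section \<open>The test equations\<close>

locale test_equations = nilpotent_pres +
  assumes n_pos: "1 \<le> n"
    and test1: "\<And>i j k. i \<in> {1..n} \<Longrightarrow> j \<in> {1..n} \<Longrightarrow> k \<in> {1..n} \<Longrightarrow>
        weight n r e b k + weight n r e b j + weight n r e b i \<le> max_weight n r e b \<Longrightarrow>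
        c_mul n r e b (gen_lin k) (c_mul n r e b (gen_lin j) (gen_lin i))
        = c_mul n r e b (c_mul n r e b (gen_lin k) (gen_lin j)) (gen_lin i)"
    and test2: "\<And>i j m. i \<in> {1..n} \<Longrightarrow> j \<in> {1..n} \<Longrightarrow> r j = Some m \<Longrightarrow>
        weight n r e b j + weight n r e b i \<le> max_weight n r e b \<Longrightarrow>
        c_scale n r e m (c_mul n r e b (gen_lin j) (gen_lin i))
        = c_mul n r e b (c_scale n r e m (gen_lin j)) (gen_lin i)"
    and test3: "\<And>i j m. i \<in> {1..n} \<Longrightarrow> j \<in> {1..n} \<Longrightarrow> r i = Some m \<Longrightarrow>
        weight n r e b j + weight n r e b i \<le> max_weight n r e b \<Longrightarrow>
        c_scale n r e m (c_mul n r e b (gen_lin j) (gen_lin i))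
        = c_mul n r e b (gen_lin j) (c_scale n r e m (gen_lin i))"
begin

text \<open>Above the maximal weight both sides of a test equation vanish, so the weight
  restriction in the hypotheses is no restriction at all.\<close>
lemma test_assoc:
  assumes "i \<in> {1..n}" "j \<in> {1..n}" "k \<in> {1..n}"
  shows "c_mul n r e b (gen_lin k) (c_mul n r e b (gen_lin j) (gen_lin i))
       = c_mul n r e b (c_mul n r e b (gen_lin k) (gen_lin j)) (gen_lin i)"
proof (cases "weight n r e b k + weight n r e b j + weight n r e b i \<le> max_weight n r e b")
  case False
  let ?w = "weight n r e b k + weight n r e b j + weight n r e b i"
  have "weight_at_least n r e b (weight n r e b k + (weight n r e b j + weight n r e b i))
          (c_mul n r e b (gen_lin k) (c_mul n r e b (gen_lin j) (gen_lin i)))"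
    and "weight_at_least n r e b ?w (c_mul n r e b (c_mul n r e b (gen_lin k) (gen_lin j)) (gen_lin i))"
    unfolding c_mul_def using assms
    by (intro weight_at_least_collect_lin weight_at_least_mul_lin weight_at_least_gen_lin; simp)+
  then have w: "weight_at_least n r e b ?w (c_mul n r e b (gen_lin k) (c_mul n r e b (gen_lin j) (gen_lin i)))"
    "weight_at_least n r e b ?w (c_mul n r e b (c_mul n r e b (gen_lin k) (gen_lin j)) (gen_lin i))"
    by (simp_all add: add.assoc)
  have "max_weight n r e b < ?w" using False by simp
  from weight_at_least_above_max_weight[OF this w(1)] weight_at_least_above_max_weight[OF this w(2)]
  show ?thesis by simp
qed (use test1 assms in blast)

lemma test_power_left:
  assumes "i \<in> {1..n}" "j \<in> {1..n}" "r j = Some m"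
  shows "c_scale n r e m (c_mul n r e b (gen_lin j) (gen_lin i))
       = c_mul n r e b (c_scale n r e m (gen_lin j)) (gen_lin i)"
proof (cases "weight n r e b j + weight n r e b i \<le> max_weight n r e b")
  case False
  let ?w = "weight n r e b j + weight n r e b i"
  have w: "weight_at_least n r e b ?w (c_scale n r e m (c_mul n r e b (gen_lin j) (gen_lin i)))"
    "weight_at_least n r e b ?w (c_mul n r e b (c_scale n r e m (gen_lin j)) (gen_lin i))"
    unfolding c_mul_def c_scale_def using assms
    by (intro weight_at_least_collect_lin weight_at_least_mul_lin weight_at_least_scale_lin
        weight_at_least_gen_lin; simp)+
  have "max_weight n r e b < ?w" using False by simp
  from weight_at_least_above_max_weight[OF this w(1)] weight_at_least_above_max_weight[OF this w(2)]
  show ?thesis by simp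
qed (use test2 assms in blast)

lemma test_power_right:
  assumes "i \<in> {1..n}" "j \<in> {1..n}" "r i = Some m"
  shows "c_scale n r e m (c_mul n r e b (gen_lin j) (gen_lin i))
       = c_mul n r e b (gen_lin j) (c_scale n r e m (gen_lin i))"
proof (cases "weight n r e b j + weight n r e b i \<le> max_weight n r e b")
  case False
  let ?w = "weight n r e b j + weight n r e b i"
  have w: "weight_at_least n r e b ?w (c_scale n r e m (c_mul n r e b (gen_lin j) (gen_lin i)))"
    "weight_at_least n r e b ?w (c_mul n r e b (gen_lin j) (c_scale n r e m (gen_lin i)))"
    unfolding c_mul_def c_scale_def using assms
    by (intro weight_at_least_collect_lin weight_at_least_mul_lin weight_at_least_scale_lin
        weight_at_least_gen_lin; simp)+
  have "max_weight n r e b < ?w" using False by simp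
  from weight_at_least_above_max_weight[OF this w(1)] weight_at_least_above_max_weight[OF this w(2)]
  show ?thesis by simp
qed (use test3 assms in blast)

lemma linpoly_c_mul_gen1_left:
  assumes "vanishes_below 2 u"
  shows "linpoly n 2 (c_mul n r e b (gen_lin 1) u) \<approx> lin_eval n (tauL_gen n b) u"
proof -
  have "linpoly n 2 (c_mul n r e b (gen_lin 1) u) \<approx> linpoly n 2 (mul_lin n b (gen_lin 1) u)"
    unfolding c_mul_def by (rule linpoly_collect_lin[OF vanishes_below_mul_lin])
  also have "\<dots> = lin_eval n (tauL_gen n b) u"
    by (rule linpoly_mul_lin_gen1_left[OF n_pos assms])
  finally show ?thesis .
qed

lemma linpoly_c_mul_gen1_right:
  assumes "vanishes_below 2 u"
  shows "linpoly n 2 (c_mul n r e b u (gen_lin 1)) \<approx> lin_eval n (tauR_gen n b) u"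
proof -
  have "linpoly n 2 (c_mul n r e b u (gen_lin 1)) \<approx> linpoly n 2 (mul_lin n b u (gen_lin 1))"
    unfolding c_mul_def by (rule linpoly_collect_lin[OF vanishes_below_mul_lin])
  also have "\<dots> = lin_eval n (tauR_gen n b) u"
    by (rule linpoly_mul_lin_gen1_right[OF n_pos assms])
  finally show ?thesis .
qed

text \<open>This is the well-definedness of \<open>\<phi>\<^sub>L\<close> on \<open>A\<^bsup>[2]\<^esup>\<close>; here the third test
  equation enters.\<close>
lemma power_rels_hold_tauL_gen: "power_rels_hold n r e b (tauL_gen n b) 2"
proof (rule power_rels_hold_downward)
  fix i m
  assume i: "i \<in> {2..n}" and m: "r i = Some m" and g: "power_rels_hold n r e b (tauL_gen n b) (Suc i)"
  then have i1: "i \<in> {1..n}" by simp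
  have "ncsc (of_nat m) (tauL_gen n b i)
      \<approx> ncsc (of_nat m) (linpoly n 2 (c_mul n r e b (gen_lin 1) (gen_lin i)))"
    unfolding tauL_gen_eq_prod_rhs using i1 n_pos by (intro alg_eq_ncsc alg_eq_sym[OF linpoly_c_mul_gens]) auto
  also have "\<dots> \<approx> linpoly n 2 (c_scale n r e m (c_mul n r e b (gen_lin 1) (gen_lin i)))"
    by (rule alg_eq_sym[OF linpoly_c_scale[OF vanishes_below_c_mul]])
  also have "\<dots> = linpoly n 2 (c_mul n r e b (gen_lin 1) (collect_lin n r e (power_rhs_vec n e i)))"
    using test_power_right[OF i1 _ m] n_pos by (simp add: c_scale_def collect_lin_scale_gen_lin[OF i1 m])
  also have "\<dots> \<approx> lin_eval n (tauL_gen n b) (collect_lin n r e (power_rhs_vec n e i))"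
    using i by (intro linpoly_c_mul_gen1_left vanishes_below_collect_lin vanishes_below_mono[OF vanishes_below_power_rhs_vec]) auto
  also have "\<dots> \<approx> lin_eval n (tauL_gen n b) (power_rhs_vec n e i)"
    using i g by (intro lin_eval_collect_lin[of "Suc i"] vanishes_below_power_rhs_vec) auto
  also have "\<dots> = (\<Sum>t\<in>{i<..n}. ncsc (e i t) (tauL_gen n b t))"
    using i by (simp add: lin_eval_power_rhs_vec)
  finally show "ncsc (of_nat m) (tauL_gen n b i) \<approx> (\<Sum>t\<in>{i<..n}. ncsc (e i t) (tauL_gen n b t))" .
qed

lemma power_rels_hold_tauR_gen: "power_rels_hold n r e b (tauR_gen n b) 2"
proof (rule power_rels_hold_downward)
  fix i m
  assume i: "i \<in> {2..n}" and m: "r i = Some m" and g: "power_rels_hold n r e b (tauR_gen n b) (Suc i)"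
  then have i1: "i \<in> {1..n}" by simp
  have "ncsc (of_nat m) (tauR_gen n b i)
      \<approx> ncsc (of_nat m) (linpoly n 2 (c_mul n r e b (gen_lin i) (gen_lin 1)))"
    unfolding tauR_gen_eq_prod_rhs using i1 n_pos by (intro alg_eq_ncsc alg_eq_sym[OF linpoly_c_mul_gens]) auto
  also have "\<dots> \<approx> linpoly n 2 (c_scale n r e m (c_mul n r e b (gen_lin i) (gen_lin 1)))"
    by (rule alg_eq_sym[OF linpoly_c_scale[OF vanishes_below_c_mul]])
  also have "\<dots> = linpoly n 2 (c_mul n r e b (collect_lin n r e (power_rhs_vec n e i)) (gen_lin 1))"
    using test_power_left[OF _ i1 m] n_pos by (simp add: c_scale_def collect_lin_scale_gen_lin[OF i1 m])
  also have "\<dots> \<approx> lin_eval n (tauR_gen n b) (collect_lin n r e (power_rhs_vec n e i))"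
    using i by (intro linpoly_c_mul_gen1_right vanishes_below_collect_lin vanishes_below_mono[OF vanishes_below_power_rhs_vec]) auto
  also have "\<dots> \<approx> lin_eval n (tauR_gen n b) (power_rhs_vec n e i)"
    using i g by (intro lin_eval_collect_lin[of "Suc i"] vanishes_below_power_rhs_vec) auto
  also have "\<dots> = (\<Sum>t\<in>{i<..n}. ncsc (e i t) (tauR_gen n b t))"
    using i by (simp add: lin_eval_power_rhs_vec)
  finally show "ncsc (of_nat m) (tauR_gen n b i) \<approx> (\<Sum>t\<in>{i<..n}. ncsc (e i t) (tauR_gen n b t))" .
qed

lemma one_mem_gens: "1 \<in> {1..n}"
  using n_pos by simp

lemma linpoly_c_mul_gen1_c_mul:
  assumes "i \<in> {1..n}" "j \<in> {1..n}"
  shows "linpoly n 2 (c_mul n r e b (gen_lin 1) (c_mul n r e b (gen_lin j) (gen_lin i)))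
         \<approx> tauL n b (prod_rhs n b i j)"
proof -
  have "linpoly n 2 (c_mul n r e b (gen_lin 1) (c_mul n r e b (gen_lin j) (gen_lin i)))
      \<approx> lin_eval n (tauL_gen n b) (c_mul n r e b (gen_lin j) (gen_lin i))"
    by (rule linpoly_c_mul_gen1_left[OF vanishes_below_c_mul])
  also have "\<dots> \<approx> lin_eval n (tauL_gen n b) (mul_lin n b (gen_lin j) (gen_lin i))"
    unfolding c_mul_def
    by (rule lin_eval_collect_lin[OF _ power_rels_hold_tauL_gen vanishes_below_mul_lin]) simp
  also have "\<dots> = tauL n b (prod_rhs n b i j)"
    using assms by (simp add: linpoly_mul_lin_gens flip: tauL_linpoly)
  finally show ?thesis .
qed

lemma linpoly_c_mul_c_mul_gen1:
  assumes "i \<in> {1..n}" "j \<in> {1..n}"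
  shows "linpoly n 2 (c_mul n r e b (c_mul n r e b (gen_lin j) (gen_lin i)) (gen_lin 1))
         \<approx> tauR n b (prod_rhs n b i j)"
proof -
  have "linpoly n 2 (c_mul n r e b (c_mul n r e b (gen_lin j) (gen_lin i)) (gen_lin 1))
      \<approx> lin_eval n (tauR_gen n b) (c_mul n r e b (gen_lin j) (gen_lin i))"
    by (rule linpoly_c_mul_gen1_right[OF vanishes_below_c_mul])
  also have "\<dots> \<approx> lin_eval n (tauR_gen n b) (mul_lin n b (gen_lin j) (gen_lin i))"
    unfolding c_mul_def
    by (rule lin_eval_collect_lin[OF _ power_rels_hold_tauR_gen vanishes_below_mul_lin]) simp
  also have "\<dots> = tauR n b (prod_rhs n b i j)"
    using assms by (simp add: linpoly_mul_lin_gens flip: tauR_linpoly)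
  finally show ?thesis .
qed

lemma linpoly_c_mul_gen_c_mul:
  assumes "i \<in> {1..n}" "j \<in> {1..n}" "k \<in> {2..n}"
  shows "linpoly n 2 (c_mul n r e b (gen_lin k) (c_mul n r e b (gen_lin j) (gen_lin i)))
         \<approx> ncmul (gen k) (prod_rhs n b i j)"
proof -
  have "linpoly n 2 (c_mul n r e b (gen_lin k) (c_mul n r e b (gen_lin j) (gen_lin i)))
      \<approx> ncmul (gen k) (linpoly n 2 (c_mul n r e b (gen_lin j) (gen_lin i)))"
    using linpoly_c_mul[OF vanishes_below_gen_lin[of k] vanishes_below_c_mul[of "gen_lin j" "gen_lin i"]] assms(3)
    by (simp add: linpoly_gen_lin[OF assms(3)])
  also have "\<dots> \<approx> ncmul (gen k) (prod_rhs n b i j)"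
    using assms by (intro alg_eq_ncmul_left over_gens_single linpoly_c_mul_gens) auto
  finally show ?thesis .
qed

lemma linpoly_c_mul_c_mul_gen:
  assumes "i \<in> {1..n}" "j \<in> {1..n}" "k \<in> {2..n}"
  shows "linpoly n 2 (c_mul n r e b (c_mul n r e b (gen_lin j) (gen_lin i)) (gen_lin k))
         \<approx> ncmul (prod_rhs n b i j) (gen k)"
proof -
  have "linpoly n 2 (c_mul n r e b (c_mul n r e b (gen_lin j) (gen_lin i)) (gen_lin k))
      \<approx> ncmul (linpoly n 2 (c_mul n r e b (gen_lin j) (gen_lin i))) (gen k)"
    using linpoly_c_mul[OF vanishes_below_c_mul[of "gen_lin j" "gen_lin i"] vanishes_below_gen_lin[of k]] assms(3)
    by (simp add: linpoly_gen_lin[OF assms(3)])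
  also have "\<dots> \<approx> ncmul (prod_rhs n b i j) (gen k)"
    using assms by (intro alg_eq_ncmul_right over_gens_single linpoly_c_mul_gens) auto
  finally show ?thesis .
qed

lemma linpoly_c_scale_c_mul:
  assumes "i \<in> {1..n}" "j \<in> {1..n}"
  shows "linpoly n 2 (c_scale n r e m (c_mul n r e b (gen_lin j) (gen_lin i)))
         \<approx> ncsc (of_nat m) (prod_rhs n b i j)"
  using linpoly_c_scale[OF vanishes_below_c_mul] alg_eq_ncsc[OF linpoly_c_mul_gens[OF assms]]
  by (rule alg_eq_trans)

lemma vanishes_below_power_rhs_vec_1: "vanishes_below 2 (power_rhs_vec n e 1)"
  using vanishes_below_power_rhs_vec[where i=1] by (simp add: numeral_2_eq_2)

lemma linpoly_c_scale_gen1: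
  assumes "r 1 = Some m"
  shows "linpoly n 2 (c_scale n r e m (gen_lin 1)) \<approx> p_elem n e"
proof -
  have "linpoly n 2 (c_scale n r e m (gen_lin 1)) = linpoly n 2 (collect_lin n r e (power_rhs_vec n e 1))"
    unfolding c_scale_def collect_lin_scale_gen_lin[OF one_mem_gens assms] ..
  also have "\<dots> \<approx> p_elem n e"
    using linpoly_collect_lin[OF vanishes_below_power_rhs_vec_1] unfolding linpoly_power_rhs_vec_1 .
  finally show ?thesis .
qed

lemma vanishes_below_c_scale_gen1:
  assumes "r 1 = Some m"
  shows "vanishes_below 2 (c_scale n r e m (gen_lin 1))"
  unfolding c_scale_def collect_lin_scale_gen_lin[OF one_mem_gens assms]
  by (rule vanishes_below_collect_lin[OF vanishes_below_power_rhs_vec_1])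

lemma linpoly_c_mul_c_scale_gen1_gen:
  assumes "r 1 = Some m" "k \<in> {2..n}"
  shows "linpoly n 2 (c_mul n r e b (c_scale n r e m (gen_lin 1)) (gen_lin k)) \<approx> ncmul (p_elem n e) (gen k)"
proof -
  have "linpoly n 2 (c_mul n r e b (c_scale n r e m (gen_lin 1)) (gen_lin k))
      \<approx> ncmul (linpoly n 2 (c_scale n r e m (gen_lin 1))) (linpoly n 2 (gen_lin k))"
    using assms by (intro linpoly_c_mul vanishes_below_c_scale_gen1 vanishes_below_gen_lin) auto
  also have "\<dots> \<approx> ncmul (p_elem n e) (gen k)"
    unfolding linpoly_gen_lin[OF assms(2)] using assms
    by (intro alg_eq_ncmul_right over_gens_single linpoly_c_scale_gen1) auto
  finally show ?thesis .
qed

lemma linpoly_c_mul_gen_c_scale_gen1: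
  assumes "r 1 = Some m" "k \<in> {2..n}"
  shows "linpoly n 2 (c_mul n r e b (gen_lin k) (c_scale n r e m (gen_lin 1))) \<approx> ncmul (gen k) (p_elem n e)"
proof -
  have "linpoly n 2 (c_mul n r e b (gen_lin k) (c_scale n r e m (gen_lin 1)))
      \<approx> ncmul (linpoly n 2 (gen_lin k)) (linpoly n 2 (c_scale n r e m (gen_lin 1)))"
    using assms by (intro linpoly_c_mul vanishes_below_c_scale_gen1 vanishes_below_gen_lin) auto
  also have "\<dots> \<approx> ncmul (gen k) (p_elem n e)"
    unfolding linpoly_gen_lin[OF assms(2)] using assms
    by (intro alg_eq_ncmul_left over_gens_single linpoly_c_scale_gen1) auto
  finally show ?thesis .
qed

lemma tauL_s_alg_eq_tauR_s: "tauL n b (s_elem n b) \<approx> tauR n b (s_elem n b)"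
proof -
  have "tauL n b (s_elem n b)
      \<approx> linpoly n 2 (c_mul n r e b (gen_lin 1) (c_mul n r e b (gen_lin 1) (gen_lin 1)))"
    unfolding s_elem_eq_prod_rhs by (rule alg_eq_sym[OF linpoly_c_mul_gen1_c_mul[OF one_mem_gens one_mem_gens]])
  also have "\<dots> = linpoly n 2 (c_mul n r e b (c_mul n r e b (gen_lin 1) (gen_lin 1)) (gen_lin 1))"
    by (simp only: test_assoc[OF one_mem_gens one_mem_gens one_mem_gens])
  also have "\<dots> \<approx> tauR n b (s_elem n b)"
    unfolding s_elem_eq_prod_rhs by (rule linpoly_c_mul_c_mul_gen1[OF one_mem_gens one_mem_gens])
  finally show ?thesis .
qed

lemma tauL_tauL_gen:
  assumes j: "j \<in> {2..n}"
  shows "tauL n b (tauL_gen n b j) \<approx> ncmul (s_elem n b) (gen j)"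
proof -
  have j1: "j \<in> {1..n}" using j by simp
  have "tauL n b (tauL_gen n b j)
      \<approx> linpoly n 2 (c_mul n r e b (gen_lin 1) (c_mul n r e b (gen_lin 1) (gen_lin j)))"
    unfolding tauL_gen_eq_prod_rhs by (rule alg_eq_sym[OF linpoly_c_mul_gen1_c_mul[OF j1 one_mem_gens]])
  also have "\<dots> = linpoly n 2 (c_mul n r e b (c_mul n r e b (gen_lin 1) (gen_lin 1)) (gen_lin j))"
    by (simp only: test_assoc[OF j1 one_mem_gens one_mem_gens])
  also have "\<dots> \<approx> ncmul (s_elem n b) (gen j)"
    unfolding s_elem_eq_prod_rhs by (rule linpoly_c_mul_c_mul_gen[OF one_mem_gens one_mem_gens j])
  finally show ?thesis .
qed

lemma tauR_tauR_gen:
  assumes j: "j \<in> {2..n}"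
  shows "tauR n b (tauR_gen n b j) \<approx> ncmul (gen j) (s_elem n b)"
proof -
  have j1: "j \<in> {1..n}" using j by simp
  have "ncmul (gen j) (s_elem n b)
      \<approx> linpoly n 2 (c_mul n r e b (gen_lin j) (c_mul n r e b (gen_lin 1) (gen_lin 1)))"
    unfolding s_elem_eq_prod_rhs by (rule alg_eq_sym[OF linpoly_c_mul_gen_c_mul[OF one_mem_gens one_mem_gens j]])
  also have "\<dots> = linpoly n 2 (c_mul n r e b (c_mul n r e b (gen_lin j) (gen_lin 1)) (gen_lin 1))"
    by (simp only: test_assoc[OF one_mem_gens one_mem_gens j1])
  also have "\<dots> \<approx> tauR n b (tauR_gen n b j)"
    unfolding tauR_gen_eq_prod_rhs by (rule linpoly_c_mul_c_mul_gen1[OF one_mem_gens j1])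
  finally show ?thesis by (rule alg_eq_sym)
qed

lemma tauR_gen_ncmul_gen:
  assumes j: "j \<in> {2..n}" and k: "k \<in> {2..n}"
  shows "ncmul (tauR_gen n b j) (gen k) \<approx> ncmul (gen j) (tauL_gen n b k)"
proof -
  have j1: "j \<in> {1..n}" and k1: "k \<in> {1..n}" using j k by simp_all
  have "ncmul (tauR_gen n b j) (gen k)
      \<approx> linpoly n 2 (c_mul n r e b (c_mul n r e b (gen_lin j) (gen_lin 1)) (gen_lin k))"
    unfolding tauR_gen_eq_prod_rhs by (rule alg_eq_sym[OF linpoly_c_mul_c_mul_gen[OF one_mem_gens j1 k]])
  also have "\<dots> = linpoly n 2 (c_mul n r e b (gen_lin j) (c_mul n r e b (gen_lin 1) (gen_lin k)))"
    by (simp only: test_assoc[OF k1 one_mem_gens j1])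
  also have "\<dots> \<approx> ncmul (gen j) (tauL_gen n b k)"
    unfolding tauL_gen_eq_prod_rhs by (rule linpoly_c_mul_gen_c_mul[OF k1 one_mem_gens j])
  finally show ?thesis .
qed

lemma tauL_tauR_gen:
  assumes j: "j \<in> {2..n}"
  shows "tauL n b (tauR_gen n b j) \<approx> tauR n b (tauL_gen n b j)"
proof -
  have j1: "j \<in> {1..n}" using j by simp
  have "tauL n b (tauR_gen n b j)
      \<approx> linpoly n 2 (c_mul n r e b (gen_lin 1) (c_mul n r e b (gen_lin j) (gen_lin 1)))"
    unfolding tauR_gen_eq_prod_rhs by (rule alg_eq_sym[OF linpoly_c_mul_gen1_c_mul[OF one_mem_gens j1]])
  also have "\<dots> = linpoly n 2 (c_mul n r e b (c_mul n r e b (gen_lin 1) (gen_lin j)) (gen_lin 1))"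
    by (simp only: test_assoc[OF one_mem_gens j1 one_mem_gens])
  also have "\<dots> \<approx> tauR n b (tauL_gen n b j)"
    unfolding tauL_gen_eq_prod_rhs by (rule linpoly_c_mul_c_mul_gen1[OF j1 one_mem_gens])
  finally show ?thesis .
qed

lemma p_ncmul_gen:
  assumes m: "r 1 = Some m" and j: "j \<in> {2..n}"
  shows "ncmul (p_elem n e) (gen j) \<approx> ncsc (of_nat m) (tauL_gen n b j)"
proof -
  have j1: "j \<in> {1..n}" using j by simp
  have "ncmul (p_elem n e) (gen j)
      \<approx> linpoly n 2 (c_mul n r e b (c_scale n r e m (gen_lin 1)) (gen_lin j))"
    by (rule alg_eq_sym[OF linpoly_c_mul_c_scale_gen1_gen[OF m j]])
  also have "\<dots> = linpoly n 2 (c_scale n r e m (c_mul n r e b (gen_lin 1) (gen_lin j)))"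
    by (simp only: test_power_left[OF j1 one_mem_gens m])
  also have "\<dots> \<approx> ncsc (of_nat m) (tauL_gen n b j)"
    unfolding tauL_gen_eq_prod_rhs by (rule linpoly_c_scale_c_mul[OF j1 one_mem_gens])
  finally show ?thesis .
qed

lemma gen_ncmul_p:
  assumes m: "r 1 = Some m" and j: "j \<in> {2..n}"
  shows "ncmul (gen j) (p_elem n e) \<approx> ncsc (of_nat m) (tauR_gen n b j)"
proof -
  have j1: "j \<in> {1..n}" using j by simp
  have "ncmul (gen j) (p_elem n e)
      \<approx> linpoly n 2 (c_mul n r e b (gen_lin j) (c_scale n r e m (gen_lin 1)))"
    by (rule alg_eq_sym[OF linpoly_c_mul_gen_c_scale_gen1[OF m j]])
  also have "\<dots> = linpoly n 2 (c_scale n r e m (c_mul n r e b (gen_lin j) (gen_lin 1)))"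
    by (simp only: test_power_right[OF one_mem_gens j1 m])
  also have "\<dots> \<approx> ncsc (of_nat m) (tauR_gen n b j)"
    unfolding tauR_gen_eq_prod_rhs by (rule linpoly_c_scale_c_mul[OF one_mem_gens j1])
  finally show ?thesis .
qed

end

section \<open>From generators to words\<close>

lemma Nil_notin_keys_tauL_gen: "[] \<notin> Poly_Mapping.keys (tauL_gen n b j)"
  by (simp add: tauL_gen_eq_prod_rhs Nil_notin_keys_prod_rhs)

lemma Nil_notin_keys_tauR_gen: "[] \<notin> Poly_Mapping.keys (tauR_gen n b j)"
  by (simp add: tauR_gen_eq_prod_rhs Nil_notin_keys_prod_rhs)

lemma word_Cons_cases:
  assumes "u \<noteq> []" "set u \<subseteq> {k..n}"
  obtains j u' where "u = j # u'" "j \<in> {k..n}" "set u' \<subseteq> {k..n}"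
  using assms by (cases u) auto

lemma word_snoc_cases:
  assumes "u \<noteq> []" "set u \<subseteq> {k..n}"
  obtains j u' where "u = u' @ [j]" "j \<in> {k..n}" "set u' \<subseteq> {k..n}"
  using assms by (cases u rule: rev_cases) auto

context test_equations
begin

lemma tauL_tauL: "x \<in> free_alg n 2 \<Longrightarrow> tauL n b (tauL n b x) \<approx> ncmul (s_elem n b) x"
proof (rule alg_eq_by_words[OF nc_linear_compose[OF nc_linear_tauL nc_linear_tauL] nc_linear_left_mult])
  fix u :: "nat list"
  assume "u \<noteq> []" "set u \<subseteq> {2..n}"
  then obtain j w where u: "u = j # w" "j \<in> {2..n}" "set w \<subseteq> {2..n}" by (rule word_Cons_cases)
  have "tauL n b (tauL n b (word u))
      = ncmul (tauL n b (tauL_gen n b j)) (word w)"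
    by (simp add: u tauL_single tauL_ncmul[OF Nil_notin_keys_tauL_gen])
  also have "\<dots> \<approx> ncmul (ncmul (s_elem n b) (gen j)) (word w)"
    by (intro alg_eq_ncmul_right over_gens_single tauL_tauL_gen u)
  also have "\<dots> = ncmul (s_elem n b) (word u)"
    by (simp add: u word_Cons_eq_ncmul[of j w] ncmul_assoc)
  finally show "tauL n b (tauL n b (word u)) \<approx> ncmul (s_elem n b) (word u)" .
qed

lemma tauR_tauR: "x \<in> free_alg n 2 \<Longrightarrow> tauR n b (tauR n b x) \<approx> ncmul x (s_elem n b)"
proof (rule alg_eq_by_words[OF nc_linear_compose[OF nc_linear_tauR nc_linear_tauR] nc_linear_right_mult])
  fix u :: "nat list"
  assume "u \<noteq> []" "set u \<subseteq> {2..n}"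
  then obtain j w where u: "u = w @ [j]" "j \<in> {2..n}" "set w \<subseteq> {2..n}" by (rule word_snoc_cases)
  have "tauR n b (tauR n b (word u))
      = ncmul (word w) (tauR n b (tauR_gen n b j))"
    by (simp add: u tauR_single tauR_ncmul[OF Nil_notin_keys_tauR_gen])
  also have "\<dots> \<approx> ncmul (word w) (ncmul (gen j) (s_elem n b))"
    by (intro alg_eq_ncmul_left over_gens_single tauR_tauR_gen u)
  also have "\<dots> = ncmul (word u) (s_elem n b)"
    by (simp add: u word_snoc_eq_ncmul[of w j] ncmul_assoc)
  finally show "tauR n b (tauR n b (word u)) \<approx> ncmul (word u) (s_elem n b)" .
qed

lemma tauR_ncmul_alg_eq_ncmul_tauL:
  assumes x: "x \<in> free_alg n 2" and y: "y \<in> free_alg n 2"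
  shows "ncmul (tauR n b x) y \<approx> ncmul x (tauL n b y)"
proof (rule alg_eq_by_words[OF nc_linear_compose[OF nc_linear_right_mult nc_linear_tauR] nc_linear_right_mult _ x])
  fix u :: "nat list"
  assume "u \<noteq> []" "set u \<subseteq> {2..n}"
  then obtain j u' where u: "u = u' @ [j]" "j \<in> {2..n}" "set u' \<subseteq> {2..n}" by (rule word_snoc_cases)
  show "ncmul (tauR n b (word u)) y \<approx> ncmul (word u) (tauL n b y)"
  proof (rule alg_eq_by_words[OF nc_linear_left_mult nc_linear_compose[OF nc_linear_left_mult nc_linear_tauL] _ y])
    fix v :: "nat list"
    assume "v \<noteq> []" "set v \<subseteq> {2..n}"
    then obtain k v' where v: "v = k # v'" "k \<in> {2..n}" "set v' \<subseteq> {2..n}" by (rule word_Cons_cases)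
    have "ncmul (tauR n b (word u)) (word v)
        = ncmul (word u') (ncmul (ncmul (tauR_gen n b j) (gen k)) (word v'))"
      by (simp add: u v tauR_single word_Cons_eq_ncmul[of k v'] ncmul_assoc)
    also have "\<dots> \<approx> ncmul (word u') (ncmul (ncmul (gen j) (tauL_gen n b k)) (word v'))"
      by (intro alg_eq_ncmul_left alg_eq_ncmul_right over_gens_single tauR_gen_ncmul_gen u v)
    also have "\<dots> = ncmul (word u) (tauL n b (word v))"
      by (simp add: u v tauL_single word_snoc_eq_ncmul[of u' j] ncmul_assoc)
    finally show "ncmul (tauR n b (word u)) (word v)
        \<approx> ncmul (word u) (tauL n b (word v))" .
  qed
qed

lemma tauL_tauR_commute: "x \<in> free_alg n 2 \<Longrightarrow> tauL n b (tauR n b x) \<approx> tauR n b (tauL n b x)"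
proof (rule alg_eq_by_words[OF nc_linear_compose[OF nc_linear_tauL nc_linear_tauR]
      nc_linear_compose[OF nc_linear_tauR nc_linear_tauL]])
  fix u :: "nat list"
  assume "u \<noteq> []" "set u \<subseteq> {2..n}"
  then obtain j w where u: "u = j # w" "j \<in> {2..n}" "set w \<subseteq> {2..n}" by (rule word_Cons_cases)
  show "tauL n b (tauR n b (word u)) \<approx> tauR n b (tauL n b (word u))"
  proof (cases "w = []")
    case True
    then show ?thesis
      using tauL_tauR_gen[OF u(2)]
      by (simp add: u tauR_single tauL_single ncmul_single_Nil_left ncmul_single_Nil_right)
  next
    case False
    then have "tauL n b (tauR n b (word u))
        = ncmul (ncmul (tauL_gen n b j) (word (butlast w))) (tauR_gen n b (last w))"
      by (simp add: u tauR_single tauL_ncmul tauL_single)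
    also have "\<dots> = tauR n b (tauL n b (word u))"
      using False by (simp add: u tauL_single tauR_ncmul tauR_single ncmul_assoc)
    finally show ?thesis by simp
  qed
qed

lemma p_ncmul:
  "r 1 = Some m \<Longrightarrow> x \<in> free_alg n 2 \<Longrightarrow> ncmul (p_elem n e) x \<approx> ncsc (of_nat m) (tauL n b x)"
proof (rule alg_eq_by_words[OF nc_linear_left_mult nc_linear_compose[OF nc_linear_scaling nc_linear_tauL]])
  fix u :: "nat list"
  assume m: "r 1 = Some m" and "u \<noteq> []" "set u \<subseteq> {2..n}"
  then obtain j w where u: "u = j # w" "j \<in> {2..n}" "set w \<subseteq> {2..n}" by (metis word_Cons_cases)
  have "ncmul (p_elem n e) (word u) = ncmul (ncmul (p_elem n e) (gen j)) (word w)"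
    by (simp add: u word_Cons_eq_ncmul[of j w] ncmul_assoc)
  also have "\<dots> \<approx> ncmul (ncsc (of_nat m) (tauL_gen n b j)) (word w)"
    by (intro alg_eq_ncmul_right over_gens_single p_ncmul_gen m u)
  also have "\<dots> = ncsc (of_nat m) (tauL n b (word u))"
    by (simp add: u tauL_single ncmul_ncsc_left)
  finally show "ncmul (p_elem n e) (word u) \<approx> ncsc (of_nat m) (tauL n b (word u))" .
qed

lemma ncmul_p:
  "r 1 = Some m \<Longrightarrow> x \<in> free_alg n 2 \<Longrightarrow> ncmul x (p_elem n e) \<approx> ncsc (of_nat m) (tauR n b x)"
proof (rule alg_eq_by_words[OF nc_linear_right_mult nc_linear_compose[OF nc_linear_scaling nc_linear_tauR]])
  fix u :: "nat list"
  assume m: "r 1 = Some m" and "u \<noteq> []" "set u \<subseteq> {2..n}"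
  then obtain j w where u: "u = w @ [j]" "j \<in> {2..n}" "set w \<subseteq> {2..n}" by (metis word_snoc_cases)
  have "ncmul (word u) (p_elem n e) = ncmul (word w) (ncmul (gen j) (p_elem n e))"
    by (simp add: u word_snoc_eq_ncmul[of w j] ncmul_assoc)
  also have "\<dots> \<approx> ncmul (word w) (ncsc (of_nat m) (tauR_gen n b j))"
    by (intro alg_eq_ncmul_left over_gens_single gen_ncmul_p m u)
  also have "\<dots> = ncsc (of_nat m) (tauR n b (word u))"
    by (simp add: u tauR_single ncmul_ncsc_right)
  finally show "ncmul (word u) (p_elem n e) \<approx> ncsc (of_nat m) (tauR n b (word u))" .
qed

end

theorem lemma23:
  fixes n :: nat and r :: "nat \<Rightarrow> nat option"
    and e :: "nat \<Rightarrow> nat \<Rightarrow> 'r::comm_ring_1" and b :: "nat \<Rightarrow> nat \<Rightarrow> nat \<Rightarrow> 'r"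
  assumes ring: "((\<forall>x::'r. x \<noteq> 0 \<longrightarrow> (\<exists>y. x * y = 1)) \<and> (\<forall>i. r i = None))
                 \<or> bij (of_int :: int \<Rightarrow> 'r)"
    and n1: "1 \<le> n"
    and pres: "nil_presentation n r e b"
    and cons: "consistent n r e b 2"
    and test1: "\<And>i j k. i \<in> {1..n} \<Longrightarrow> j \<in> {1..n} \<Longrightarrow> k \<in> {1..n} \<Longrightarrow>
        weight n r e b k + weight n r e b j + weight n r e b i \<le> max_weight n r e b \<Longrightarrow>
        c_mul n r e b (gen_lin k) (c_mul n r e b (gen_lin j) (gen_lin i))
        = c_mul n r e b (c_mul n r e b (gen_lin k) (gen_lin j)) (gen_lin i)"
    and test2: "\<And>i j m. i \<in> {1..n} \<Longrightarrow> j \<in> {1..n} \<Longrightarrow> r j = Some m \<Longrightarrow>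
        weight n r e b j + weight n r e b i \<le> max_weight n r e b \<Longrightarrow>
        c_scale n r e m (c_mul n r e b (gen_lin j) (gen_lin i))
        = c_mul n r e b (c_scale n r e m (gen_lin j)) (gen_lin i)"
    and test3: "\<And>i j m. i \<in> {1..n} \<Longrightarrow> j \<in> {1..n} \<Longrightarrow> r i = Some m \<Longrightarrow>
        weight n r e b j + weight n r e b i \<le> max_weight n r e b \<Longrightarrow>
        c_scale n r e m (c_mul n r e b (gen_lin j) (gen_lin i))
        = c_mul n r e b (gen_lin j) (c_scale n r e m (gen_lin i))"
  shows "alg_eq n r e b 2 (tauL n b (s_elem n b)) (tauR n b (s_elem n b))
    \<and> (\<forall>x\<in>free_alg n 2. \<forall>y\<in>free_alg n 2.
         alg_eq n r e b 2 (tauL n b (tauL n b x)) (ncmul (s_elem n b) x)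
       \<and> alg_eq n r e b 2 (tauR n b (tauR n b x)) (ncmul x (s_elem n b))
       \<and> alg_eq n r e b 2 (tauL n b (ncmul x y)) (ncmul (tauL n b x) y)
       \<and> alg_eq n r e b 2 (tauR n b (ncmul x y)) (ncmul x (tauR n b y))
       \<and> alg_eq n r e b 2 (ncmul (tauR n b x) y) (ncmul x (tauL n b y))
       \<and> alg_eq n r e b 2 (tauL n b (tauR n b x)) (tauR n b (tauL n b x))
       \<and> (\<forall>m. r 1 = Some m \<longrightarrow>
            alg_eq n r e b 2 (ncmul (p_elem n e) x) (ncsc (of_nat m) (tauL n b x))
          \<and> alg_eq n r e b 2 (ncmul x (p_elem n e)) (ncsc (of_nat m) (tauR n b x))))"
proof -
  interpret test_equations n r e b
    by (rule test_equations.intro[OF nilpotent_pres.intro[OF ring pres]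
          test_equations_axioms.intro[OF n1 test1 test2 test3]])
  show ?thesis
  proof (intro conjI ballI allI impI)
    show "tauL n b (s_elem n b) \<approx> tauR n b (s_elem n b)"
      by (rule tauL_s_alg_eq_tauR_s)
    fix x y :: "'r ncpoly"
    assume x: "x \<in> free_alg n 2" and y: "y \<in> free_alg n 2"
    show "tauL n b (tauL n b x) \<approx> ncmul (s_elem n b) x" by (rule tauL_tauL[OF x])
    show "tauR n b (tauR n b x) \<approx> ncmul x (s_elem n b)" by (rule tauR_tauR[OF x])
    show "tauL n b (ncmul x y) \<approx> ncmul (tauL n b x) y"
      by (simp add: tauL_ncmul[OF free_alg_Nil_notin[OF x]])
    show "tauR n b (ncmul x y) \<approx> ncmul x (tauR n b y)"
      by (simp add: tauR_ncmul[OF free_alg_Nil_notin[OF y]])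
    show "ncmul (tauR n b x) y \<approx> ncmul x (tauL n b y)"
      by (rule tauR_ncmul_alg_eq_ncmul_tauL[OF x y])
    show "tauL n b (tauR n b x) \<approx> tauR n b (tauL n b x)" by (rule tauL_tauR_commute[OF x])
    fix m
    assume m: "r 1 = Some m"
    show "ncmul (p_elem n e) x \<approx> ncsc (of_nat m) (tauL n b x)" by (rule p_ncmul[OF m x])
    show "ncmul x (p_elem n e) \<approx> ncsc (of_nat m) (tauR n b x)" by (rule ncmul_p[OF m x])
  qed
qed

end
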